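(* For every commutative ring $R$ with unity, the group $E(R)$ is topologically generated by $\{V^n\langle x\rangle\mid x\in R,\ n\ge0\}$. Moreover, the functor $E:\mathsf{ComRings}\to\mathsf{Ab}$ is a pre-Witt functor.
   Context: Fix a prime $p$. For a commutative ring $B$: $B^{\mathbb N_0}$ has the product topology, $V(b_0,b_1,\dots)=p(0,b_0,b_1,\dots)$, $\langle b\rangle=(b,b^p,b^{p^2},\dots)$, and $X(B)$ is the closed subgroup generated by $\{V^n\langle b\rangle\}$. For $R$ commutative let $A=\mathbb Z[R]$ be the polynomial ring on the set $R$ (variable $[x]$ for $x\in R$), $I$ the kernel of the natural surjection $A\to R$, and $X_I(A)\subset X(A)$ the closed subgroup generated by $\{V^n\langle a\rangle-V^n\langle b\rangle\mid n\in\mathbb N_0,\ a,b\in A,\ a-b\in I\}$. Set $E(R)=X(A)/X_I(A)$, with induced endomorphism $V$ and map $\langle\ \rangle:R\to E(R)$, $x\mapsto$ class of $\langle [x]\rangle$; the topology on $E(R)$ is the quotient topology. A pre-Witt functor is a functor $F:\mathsf{ComRings}\to\mathsf{Ab}$ with functorial group endomorphisms $V$ and functorial set maps $\langle\ \rangle:R\to F(R)$ such that: (1) $\langle 0\rangle=0$ and, if $p\ne2$, $\langle -x\rangle=-\langle x\rangle$; (2) $x\mapsto V\langle x^p\rangle-p\langle x\rangle$ is additive; (3) $F(R)$ is complete with respect to the filtration $\{V^nF(R)\}$; (4) $A$ $p$-torsion free implies $F(A)$ $p$-torsion free. *)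

theory Defs
  imports "HOL-Analysis.Analysis" "HOL-Library.Poly_Mapping" "HOL-Algebra.Algebra"
begin

definition seqV :: "nat \<Rightarrow> (nat \<Rightarrow> 'b::comm_ring_1) \<Rightarrow> (nat \<Rightarrow> 'b)" where
  "seqV p b = (\<lambda>i. if i = 0 then 0 else of_nat p * b (i - 1))"

definition teich :: "nat \<Rightarrow> 'b::comm_ring_1 \<Rightarrow> (nat \<Rightarrow> 'b)" where
  "teich p b = (\<lambda>i. b ^ (p ^ i))"

definition seq_top :: "(nat \<Rightarrow> 'b) topology" where
  "seq_top = product_topology (\<lambda>_. discrete_topology UNIV) UNIV"

definition add_subgroup :: "(nat \<Rightarrow> 'b::ab_group_add) set \<Rightarrow> bool" where
  "add_subgroup H \<longleftrightarrow> (\<lambda>_. 0) \<in> H \<and> (\<forall>x\<in>H. \<forall>y\<in>H. (\<lambda>i. x i + y i) \<in> H)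
     \<and> (\<forall>x\<in>H. (\<lambda>i. - x i) \<in> H)"

definition closed_subgroup_gen :: "(nat \<Rightarrow> 'b::ab_group_add) set \<Rightarrow> (nat \<Rightarrow> 'b) set" where
  "closed_subgroup_gen S = \<Inter>{H. add_subgroup H \<and> closedin seq_top H \<and> S \<subseteq> H}"

definition Xgrp :: "nat \<Rightarrow> (nat \<Rightarrow> 'b::comm_ring_1) set" where
  "Xgrp p = closed_subgroup_gen {(seqV p ^^ n) (teich p b) | n b. True}"

type_synonym 'r zpoly = "('r \<Rightarrow>\<^sub>0 nat) \<Rightarrow>\<^sub>0 int"

definition pvar :: "'r \<Rightarrow> 'r zpoly" where
  "pvar x = Poly_Mapping.single (Poly_Mapping.single x 1) 1"

definition peval :: "('r \<Rightarrow> 'b::comm_ring_1) \<Rightarrow> 'r zpoly \<Rightarrow> 'b" where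
  "peval \<phi> P = (\<Sum>mon\<in>Poly_Mapping.keys P. of_int (Poly_Mapping.lookup P mon) * (\<Prod>v\<in>Poly_Mapping.keys mon. (\<phi> v) ^ (Poly_Mapping.lookup mon v)))"

definition Iker :: "('r::comm_ring_1) zpoly set" where
  "Iker = {a. peval (id :: 'r \<Rightarrow> 'r) a = 0}"

definition XIgrp :: "nat \<Rightarrow> (nat \<Rightarrow> ('r::comm_ring_1) zpoly) set" where
  "XIgrp p = closed_subgroup_gen
     {(\<lambda>i. (seqV p ^^ n) (teich p a) i - (seqV p ^^ n) (teich p b) i) | n a b.
        a - b \<in> (Iker :: 'r zpoly set)}"

type_synonym 'r Eelt = "(nat \<Rightarrow> 'r zpoly) set"

definition Ecos :: "nat \<Rightarrow> (nat \<Rightarrow> ('r::comm_ring_1) zpoly) \<Rightarrow> 'r Eelt" where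
  "Ecos p x = (\<lambda>y. (\<lambda>i. x i + y i)) ` XIgrp p"

definition E :: "nat \<Rightarrow> ('r::comm_ring_1) Eelt monoid" where
  "E p = \<lparr> carrier = Ecos p ` Xgrp p,
           mult = (\<lambda>C D. {(\<lambda>i. c i + d i) | c d. c \<in> C \<and> d \<in> D}),
           one = XIgrp p \<rparr>"

definition EV :: "nat \<Rightarrow> ('r::comm_ring_1) Eelt \<Rightarrow> 'r Eelt" where
  "EV p C = {(\<lambda>i. seqV p c i + y i) | c y. c \<in> C \<and> y \<in> XIgrp p}"

definition Eteich :: "nat \<Rightarrow> 'r::comm_ring_1 \<Rightarrow> 'r Eelt" where
  "Eteich p x = Ecos p (teich p (pvar x))"

text \<open>quotient topology on E(R) (X(A) carries the subspace topology of A^N)\<close>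
definition Etop :: "nat \<Rightarrow> ('r::comm_ring_1) Eelt topology" where
  "Etop p = topology (\<lambda>U. U \<subseteq> carrier (E p) \<and>
                        openin (subtopology seq_top (Xgrp p)) (\<Union>U))"

definition cring_hom :: "('r::comm_ring_1 \<Rightarrow> 's::comm_ring_1) \<Rightarrow> bool" where
  "cring_hom f \<longleftrightarrow> f 0 = 0 \<and> f 1 = 1 \<and> (\<forall>x y. f (x + y) = f x + f y)
      \<and> (\<forall>x y. f (x * y) = f x * f y)"

definition Zmap :: "('r \<Rightarrow> 's) \<Rightarrow> 'r zpoly \<Rightarrow> 's zpoly" where
  "Zmap f = peval (\<lambda>x. pvar (f x))"

definition Emap :: "nat \<Rightarrow> ('r::comm_ring_1 \<Rightarrow> 's::comm_ring_1) \<Rightarrow> 'r Eelt \<Rightarrow> 's Eelt" where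
  "Emap p f C = {(\<lambda>i. Zmap f (c i) + y i) | c y. c \<in> C \<and> y \<in> XIgrp p}"

definition filt_complete :: "('a, 'm) monoid_scheme \<Rightarrow> ('a \<Rightarrow> 'a) \<Rightarrow> bool" where
  "filt_complete G V \<longleftrightarrow>
     (\<Inter>n. (V ^^ n) ` carrier G) = {\<one>\<^bsub>G\<^esub>} \<and>
     (\<forall>x :: nat \<Rightarrow> 'a.
        (\<forall>n. x n \<in> carrier G \<and> x (Suc n) \<otimes>\<^bsub>G\<^esub> inv\<^bsub>G\<^esub> (x n) \<in> (V ^^ n) ` carrier G)
        \<longrightarrow> (\<exists>y\<in>carrier G. \<forall>n. y \<otimes>\<^bsub>G\<^esub> inv\<^bsub>G\<^esub> (x n) \<in> (V ^^ n) ` carrier G))"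

end

theory Submission
  imports Defs
begin

text \<open>
  Everything is computed on representatives: \<open>E(R)\<close> is the quotient of the closed subgroup
  \<open>X(A)\<close> of \<open>A\<^sup>\<nat>\<close>, \<open>A = \<int>[R]\<close>, by \<open>X\<^sub>I(A)\<close>. A generator \<open>V\<^sup>n\<langle>b\<rangle>\<close> of \<open>X(A)\<close> is
  congruent modulo \<open>X\<^sub>I(A)\<close> to \<open>V\<^sup>n\<langle>[b\<^sub>R]\<rangle>\<close>, where \<open>b\<^sub>R\<close> is the image of \<open>b\<close> in \<open>R\<close>,
  so the classes \<open>V\<^sup>n\<langle>x\<rangle>\<close> generate \<open>E(R)\<close> topologically. Modulo \<open>X\<^sub>I(A)\<close> the element
  \<open>V\<langle>x\<^sup>p\<rangle> - p\<langle>x\<rangle>\<close> is represented by \<open>(-p[x], 0, 0, \<dots>)\<close>, which is additive in \<open>x\<close>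
  because \<open>[x + y] - [x] - [y]\<close> lies in \<open>I\<close>. Since \<open>V\<^sup>k\<close> shifts a sequence past its first
  \<open>k\<close> entries, series \<open>\<Sum>\<^sub>k V\<^sup>k z\<^sub>k\<close> converge entrywise, and the closedness of \<open>X(A)\<close> and
  \<open>X\<^sub>I(A)\<close> gives completeness.

  For torsion-freeness, every \<open>x \<in> X(A)\<close> satisfies Dwork's congruences
  \<open>x\<^sub>n\<^sub>+\<^sub>1 \<equiv> \<phi>(x\<^sub>n)\<close> modulo \<open>p\<^sup>n\<^sup>+\<^sup>1\<close> for the Frobenius lift \<open>\<phi>[x] = [x]\<^sup>p\<close>. If \<open>p x\<close> lies
  in \<open>X\<^sub>I(A)\<close> and \<open>R\<close> has no \<open>p\<close>-torsion, all entries of \<open>x\<close> lie in \<open>I\<close>; such a Dwork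
  sequence splits as \<open>\<langle>x\<^sub>0\<rangle> + V y\<close> with \<open>y\<close> of the same kind, as \<open>\<int>[R]\<close> has no \<open>p\<close>-torsion
  either, so by iteration \<open>x\<close> lies in the closure of \<open>X\<^sub>I(A)\<close>.
\<close>

section \<open>Evaluation of integer polynomials\<close>

definition monom_eval :: "('r \<Rightarrow> 'b::comm_ring_1) \<Rightarrow> ('r \<Rightarrow>\<^sub>0 nat) \<Rightarrow> 'b" where
  "monom_eval \<phi> m = (\<Prod>v\<in>Poly_Mapping.keys m. \<phi> v ^ Poly_Mapping.lookup m v)"

lemma monom_eval_eq_prod:
  assumes "finite S" "Poly_Mapping.keys m \<subseteq> S"
  shows "monom_eval \<phi> m = (\<Prod>v\<in>S. \<phi> v ^ Poly_Mapping.lookup m v)"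
  unfolding monom_eval_def
  by (rule prod.mono_neutral_left[OF assms]) (auto simp: in_keys_iff)

lemma monom_eval_add: "monom_eval \<phi> (m + n) = monom_eval \<phi> m * monom_eval \<phi> n"
proof -
  let ?S = "Poly_Mapping.keys m \<union> Poly_Mapping.keys n"
  have "monom_eval \<phi> (m + n) = (\<Prod>v\<in>?S. \<phi> v ^ Poly_Mapping.lookup (m + n) v)"
    by (rule monom_eval_eq_prod) (use keys_add[of m n] in auto)
  also have "\<dots> = (\<Prod>v\<in>?S. \<phi> v ^ Poly_Mapping.lookup m v) * (\<Prod>v\<in>?S. \<phi> v ^ Poly_Mapping.lookup n v)"
    by (simp add: lookup_add power_add prod.distrib)
  also have "\<dots> = monom_eval \<phi> m * monom_eval \<phi> n"
    by (subst (1 2) monom_eval_eq_prod[of ?S]) auto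
  finally show ?thesis .
qed

lemma peval_eq_sum_monom_eval:
  "peval \<phi> P = (\<Sum>m\<in>Poly_Mapping.keys P. of_int (Poly_Mapping.lookup P m) * monom_eval \<phi> m)"
  by (simp add: peval_def monom_eval_def)

lemma peval_eq_sum:
  assumes "finite S" "Poly_Mapping.keys P \<subseteq> S"
  shows "peval \<phi> P = (\<Sum>m\<in>S. of_int (Poly_Mapping.lookup P m) * monom_eval \<phi> m)"
  unfolding peval_eq_sum_monom_eval
  by (rule sum.mono_neutral_left[OF assms]) (auto simp: in_keys_iff)

lemma peval_add: "peval \<phi> (P + Q) = peval \<phi> P + peval \<phi> Q"
proof -
  let ?S = "Poly_Mapping.keys P \<union> Poly_Mapping.keys Q"
  have "peval \<phi> (P + Q) = (\<Sum>m\<in>?S. of_int (Poly_Mapping.lookup (P + Q) m) * monom_eval \<phi> m)"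
    by (rule peval_eq_sum) (use keys_add[of P Q] in auto)
  also have "\<dots> = (\<Sum>m\<in>?S. of_int (Poly_Mapping.lookup P m) * monom_eval \<phi> m)
                + (\<Sum>m\<in>?S. of_int (Poly_Mapping.lookup Q m) * monom_eval \<phi> m)"
    by (simp add: lookup_add distrib_right sum.distrib)
  also have "\<dots> = peval \<phi> P + peval \<phi> Q"
    by (subst (1 2) peval_eq_sum[of ?S]) auto
  finally show ?thesis .
qed

lemma peval_zero [simp]: "peval \<phi> 0 = 0"
  by (simp add: peval_def)

lemma peval_single: "peval \<phi> (Poly_Mapping.single m c) = of_int c * monom_eval \<phi> m"
  by (simp add: peval_eq_sum_monom_eval)

lemma peval_sum: "peval \<phi> (sum f S) = (\<Sum>x\<in>S. peval \<phi> (f x))"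
  by (induction S rule: infinite_finite_induct) (auto simp: peval_add)

lemma poly_mapping_sum_single:
  "P = (\<Sum>m\<in>Poly_Mapping.keys P. Poly_Mapping.single m (Poly_Mapping.lookup P m))"
  by (rule poly_mapping_eqI) (auto simp: lookup_sum lookup_single when_def in_keys_iff)

lemma peval_mult: "peval \<phi> (P * Q) = peval \<phi> P * peval \<phi> Q"
proof -
  let ?sP = "\<lambda>m. Poly_Mapping.single m (Poly_Mapping.lookup P m)"
  let ?sQ = "\<lambda>m. Poly_Mapping.single m (Poly_Mapping.lookup Q m)"
  have "P * Q = (\<Sum>k\<in>Poly_Mapping.keys P. ?sP k) * (\<Sum>l\<in>Poly_Mapping.keys Q. ?sQ l)"
    by (simp flip: poly_mapping_sum_single)
  also have "\<dots> = (\<Sum>k\<in>Poly_Mapping.keys P. \<Sum>l\<in>Poly_Mapping.keys Q. ?sP k * ?sQ l)"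
    by (rule sum_product)
  finally have "peval \<phi> (P * Q)
      = (\<Sum>k\<in>Poly_Mapping.keys P. \<Sum>l\<in>Poly_Mapping.keys Q. peval \<phi> (?sP k * ?sQ l))"
    by (simp add: peval_sum)
  also have "\<dots> = (\<Sum>k\<in>Poly_Mapping.keys P. \<Sum>l\<in>Poly_Mapping.keys Q. peval \<phi> (?sP k) * peval \<phi> (?sQ l))"
    by (simp add: mult_single peval_single monom_eval_add mult_ac)
  also have "\<dots> = (\<Sum>k\<in>Poly_Mapping.keys P. peval \<phi> (?sP k)) * (\<Sum>l\<in>Poly_Mapping.keys Q. peval \<phi> (?sQ l))"
    by (rule sum_product[symmetric])
  also have "\<dots> = peval \<phi> P * peval \<phi> Q"
    by (simp only: peval_sum[symmetric] poly_mapping_sum_single[symmetric])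
  finally show ?thesis .
qed

lemma peval_one [simp]: "peval \<phi> 1 = 1"
  by (simp add: peval_def)

lemma peval_pvar [simp]: "peval \<phi> (pvar v) = \<phi> v"
  by (simp add: pvar_def peval_single monom_eval_def)

lemma cring_hom_peval: "cring_hom (peval \<phi>)"
  by (simp add: cring_hom_def peval_add peval_mult)

lemma cring_hom_zero: "cring_hom f \<Longrightarrow> f 0 = 0"
  by (simp add: cring_hom_def)

lemma cring_hom_one: "cring_hom f \<Longrightarrow> f 1 = 1"
  by (simp add: cring_hom_def)

lemma cring_hom_add: "cring_hom f \<Longrightarrow> f (x + y) = f x + f y"
  by (simp add: cring_hom_def)

lemma cring_hom_mult: "cring_hom f \<Longrightarrow> f (x * y) = f x * f y"
  by (simp add: cring_hom_def)

lemma cring_hom_uminus: "cring_hom f \<Longrightarrow> f (- x) = - f x"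
  using cring_hom_add[of f x "- x"] by (simp add: cring_hom_zero eq_neg_iff_add_eq_0 add.commute)

lemma cring_hom_diff: "cring_hom f \<Longrightarrow> f (x - y) = f x - f y"
  using cring_hom_add[of f x "- y"] by (simp add: cring_hom_uminus)

lemma cring_hom_of_nat: "cring_hom f \<Longrightarrow> f (of_nat n) = of_nat n"
  by (induction n) (simp_all add: cring_hom_zero cring_hom_one cring_hom_add)

lemma cring_hom_power: "cring_hom f \<Longrightarrow> f (x ^ n) = f x ^ n"
  by (induction n) (simp_all add: cring_hom_one cring_hom_mult)

lemma cring_hom_comp: "cring_hom f \<Longrightarrow> cring_hom g \<Longrightarrow> cring_hom (g \<circ> f)"
  by (simp add: cring_hom_def)

lemma cring_hom_id: "cring_hom id"
  by (simp add: cring_hom_def)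

lemmas peval_uminus = cring_hom_uminus[OF cring_hom_peval]
lemmas peval_diff = cring_hom_diff[OF cring_hom_peval]
lemmas peval_power = cring_hom_power[OF cring_hom_peval]

lemma pvar_power: "Poly_Mapping.single (Poly_Mapping.single v k) (1::int) = pvar v ^ k"
proof (induction k)
  case (Suc k)
  have "Poly_Mapping.single (Poly_Mapping.single v (Suc k)) (1::int)
      = Poly_Mapping.single (Poly_Mapping.single v k + Poly_Mapping.single v 1) (1 * 1)"
    by (simp flip: single_add)
  also have "\<dots> = pvar v ^ k * pvar v"
    by (simp only: mult_single[symmetric] Suc pvar_def)
  finally show ?case
    by (simp add: mult.commute)
qed simp

lemma single_sum_eq_prod_single:
  "Poly_Mapping.single (sum g S) (1::int) = (\<Prod>w\<in>S. Poly_Mapping.single (g w) 1)"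
proof (induction S rule: infinite_finite_induct)
  case (insert x F)
  have "Poly_Mapping.single (g x + sum g F) (1::int)
      = Poly_Mapping.single (g x) 1 * Poly_Mapping.single (sum g F) 1"
    by (simp add: mult_single)
  with insert show ?case
    by simp
qed simp_all

lemma zpoly_induct [case_names one var diff mult]:
  fixes Q :: "'r zpoly \<Rightarrow> bool"
  assumes one: "Q 1" and var: "\<And>v. Q (pvar v)"
    and diff: "\<And>P P'. Q P \<Longrightarrow> Q P' \<Longrightarrow> Q (P - P')"
    and mult: "\<And>P P'. Q P \<Longrightarrow> Q P' \<Longrightarrow> Q (P * P')"
  shows "Q P"
proof -
  have prod: "Q (prod f S)" if "\<And>x. x \<in> S \<Longrightarrow> Q (f x)" for f and S :: "'r set"
    using that by (induction S rule: infinite_finite_induct) (auto intro: mult one)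
  have var_power: "Q (pvar w ^ k)" for w k
    by (induction k) (auto intro: mult var one)
  have monomial: "Q (Poly_Mapping.single m 1)" for m
  proof -
    have "Poly_Mapping.single m (1::int)
        = Poly_Mapping.single (\<Sum>w\<in>Poly_Mapping.keys m. Poly_Mapping.single w (Poly_Mapping.lookup m w)) 1"
      by (simp flip: poly_mapping_sum_single)
    also have "\<dots> = (\<Prod>w\<in>Poly_Mapping.keys m. pvar w ^ Poly_Mapping.lookup m w)"
      by (simp add: single_sum_eq_prod_single pvar_power)
    finally show ?thesis
      by (auto intro: prod var_power)
  qed
  have zero: "Q 0"
    using diff[OF one one] by simp
  show ?thesis
    using subset_UNIV by (induction P rule: frag_induction) (auto intro: zero monomial diff)
qed

lemma zpoly_cring_hom_eqI:
  fixes h h' :: "'r zpoly \<Rightarrow> 'b::comm_ring_1"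
  assumes "cring_hom h" "cring_hom h'" "\<And>v. h (pvar v) = h' (pvar v)"
  shows "h P = h' P"
  by (induction P rule: zpoly_induct)
     (use assms in \<open>simp_all add: cring_hom_one cring_hom_diff cring_hom_mult\<close>)

lemma cring_hom_Zmap: "cring_hom (Zmap f)"
  by (simp add: Zmap_def cring_hom_peval)

lemma Zmap_pvar [simp]: "Zmap f (pvar v) = pvar (f v)"
  by (simp add: Zmap_def)

lemma Zmap_id: "Zmap id P = P"
  using zpoly_cring_hom_eqI[OF cring_hom_Zmap cring_hom_id, of id] by simp

lemma Zmap_comp: "Zmap (g \<circ> f) P = Zmap g (Zmap f P)"
proof -
  have "Zmap (g \<circ> f) P = (Zmap g \<circ> Zmap f) P"
    by (rule zpoly_cring_hom_eqI[where h = "Zmap (g \<circ> f)" and h' = "Zmap g \<circ> Zmap f"])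
       (simp_all add: cring_hom_Zmap cring_hom_comp)
  then show ?thesis
    by simp
qed

lemma peval_id_Zmap:
  assumes "cring_hom f"
  shows "peval id (Zmap f P) = f (peval id P)"
proof -
  have "(peval id \<circ> Zmap f) P = (f \<circ> peval id) P"
    by (rule zpoly_cring_hom_eqI[where h = "peval id \<circ> Zmap f" and h' = "f \<circ> peval id"])
       (simp_all add: assms cring_hom_comp cring_hom_Zmap cring_hom_peval)
  then show ?thesis
    by simp
qed


section \<open>Closed subgroups of sequence groups\<close>

definition prefix_closure :: "(nat \<Rightarrow> 'b) set \<Rightarrow> (nat \<Rightarrow> 'b) set" where
  "prefix_closure H = {x. \<forall>n. \<exists>h\<in>H. \<forall>i<n. h i = x i}"

lemma prefix_closure_iff: "x \<in> prefix_closure H \<longleftrightarrow> (\<forall>n. \<exists>h\<in>H. \<forall>i<n. h i = x i)"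
  by (simp add: prefix_closure_def)

lemma subset_prefix_closure: "H \<subseteq> prefix_closure H"
  by (auto simp: prefix_closure_def)

lemma prefix_closure_prefix_closure: "prefix_closure (prefix_closure H) \<subseteq> prefix_closure H"
proof
  fix x assume x: "x \<in> prefix_closure (prefix_closure H)"
  show "x \<in> prefix_closure H"
    unfolding prefix_closure_iff
  proof
    fix n
    obtain h where h: "h \<in> prefix_closure H" "\<forall>i<n. h i = x i"
      using x[unfolded prefix_closure_iff[of x]] by blast
    from h(1)[unfolded prefix_closure_iff] obtain h' where "h' \<in> H" "\<forall>i<n. h' i = h i"
      by blast
    with h show "\<exists>h\<in>H. \<forall>i<n. h i = x i"
      by auto
  qed
qed

lemma topspace_seq_top [simp]: "topspace seq_top = UNIV"
  by (simp add: seq_top_def)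

lemma openin_seq_top_iff:
  "openin seq_top S \<longleftrightarrow> (\<forall>x\<in>S. \<exists>n. \<forall>y. (\<forall>i<n. y i = x i) \<longrightarrow> y \<in> S)"
proof
  assume "openin seq_top S"
  then have S: "\<forall>x\<in>S. \<exists>U. finite {i. U i \<noteq> UNIV} \<and> x \<in> Pi\<^sub>E UNIV U \<and> Pi\<^sub>E UNIV U \<subseteq> S"
    unfolding seq_top_def openin_product_topology_alt by simp
  show "\<forall>x\<in>S. \<exists>n. \<forall>y. (\<forall>i<n. y i = x i) \<longrightarrow> y \<in> S"
  proof
    fix x assume "x \<in> S"
    then obtain U where fin: "finite {i. U i \<noteq> UNIV}" and x: "x \<in> Pi\<^sub>E UNIV U"
      and sub: "Pi\<^sub>E UNIV U \<subseteq> S"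
      using S by auto
    obtain n where n: "{i. U i \<noteq> UNIV} \<subseteq> {..<n}"
      using finite_nat_bounded[OF fin] by blast
    have "y \<in> Pi\<^sub>E UNIV U" if "\<forall>i<n. y i = x i" for y
      using that x n by (force simp: PiE_def Pi_def)
    with sub show "\<exists>n. \<forall>y. (\<forall>i<n. y i = x i) \<longrightarrow> y \<in> S"
      by blast
  qed
next
  assume S: "\<forall>x\<in>S. \<exists>n. \<forall>y. (\<forall>i<n. y i = x i) \<longrightarrow> y \<in> S"
  show "openin seq_top S"
    unfolding seq_top_def openin_product_topology_alt
  proof
    fix x assume "x \<in> S"
    then obtain n where n: "\<forall>y. (\<forall>i<n. y i = x i) \<longrightarrow> y \<in> S"
      using S by blast
    define U where "U i = (if i < n then {x i} else UNIV)" for i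
    have "finite {i \<in> UNIV. U i \<noteq> topspace (discrete_topology UNIV)}"
      by (rule finite_subset[of _ "{..<n}"]) (auto simp: U_def)
    moreover have "x \<in> Pi\<^sub>E UNIV U" "Pi\<^sub>E UNIV U \<subseteq> S"
      using n by (auto simp: U_def PiE_def Pi_def)
    ultimately show "\<exists>U. finite {i \<in> UNIV. U i \<noteq> topspace (discrete_topology UNIV)} \<and>
        (\<forall>i\<in>UNIV. openin (discrete_topology UNIV) (U i)) \<and> x \<in> Pi\<^sub>E UNIV U \<and> Pi\<^sub>E UNIV U \<subseteq> S"
      by auto
  qed
qed

lemma closedin_seq_top_iff: "closedin seq_top H \<longleftrightarrow> prefix_closure H \<subseteq> H"
proof -
  have "closedin seq_top H \<longleftrightarrow> openin seq_top (- H)"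
    by (simp add: closedin_def Compl_eq_Diff_UNIV)
  also have "\<dots> \<longleftrightarrow> prefix_closure H \<subseteq> H"
  proof
    assume "openin seq_top (- H)"
    then show "prefix_closure H \<subseteq> H"
      unfolding openin_seq_top_iff prefix_closure_iff subset_iff by (metis ComplD ComplI)
  next
    assume closed: "prefix_closure H \<subseteq> H"
    show "openin seq_top (- H)"
      unfolding openin_seq_top_iff
    proof
      fix x assume "x \<in> - H"
      with closed have "x \<notin> prefix_closure H"
        by blast
      then obtain n where "\<forall>h\<in>H. \<not> (\<forall>i<n. h i = x i)"
        unfolding prefix_closure_iff by blast
      then show "\<exists>n. \<forall>y. (\<forall>i<n. y i = x i) \<longrightarrow> y \<in> - H"
        by blast
    qed
  qed
  finally show ?thesis .
qed

lemma add_subgroup_zero: "add_subgroup H \<Longrightarrow> (\<lambda>_. 0) \<in> H"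
  by (simp add: add_subgroup_def)

lemma add_subgroup_add: "add_subgroup H \<Longrightarrow> x \<in> H \<Longrightarrow> y \<in> H \<Longrightarrow> (\<lambda>i. x i + y i) \<in> H"
  by (simp add: add_subgroup_def)

lemma add_subgroup_uminus: "add_subgroup H \<Longrightarrow> x \<in> H \<Longrightarrow> (\<lambda>i. - x i) \<in> H"
  by (simp add: add_subgroup_def)

lemma add_subgroup_diff: "add_subgroup H \<Longrightarrow> x \<in> H \<Longrightarrow> y \<in> H \<Longrightarrow> (\<lambda>i. x i - y i) \<in> H"
  using add_subgroup_add[of H x "\<lambda>i. - y i"] add_subgroup_uminus[of H y] by simp

lemma add_subgroup_of_nat_mult:
  fixes H :: "(nat \<Rightarrow> 'b::comm_ring_1) set"
  assumes "add_subgroup H" "x \<in> H"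
  shows "(\<lambda>i. of_nat n * x i) \<in> H"
proof (induction n)
  case (Suc n)
  then show ?case
    using add_subgroup_add[OF assms(1) assms(2) Suc] by (simp add: distrib_right)
qed (simp add: add_subgroup_zero[OF assms(1)])

lemma add_subgroup_prefix_closure:
  assumes H: "add_subgroup H"
  shows "add_subgroup (prefix_closure H)"
  unfolding add_subgroup_def
proof (intro conjI ballI)
  show "(\<lambda>_. 0) \<in> prefix_closure H"
    using subset_prefix_closure add_subgroup_zero[OF H] by blast
  show "(\<lambda>i. x i + y i) \<in> prefix_closure H"
    if x: "x \<in> prefix_closure H" and y: "y \<in> prefix_closure H" for x y
    unfolding prefix_closure_iff
  proof
    fix n
    obtain g h where g: "g \<in> H" "\<forall>i<n. g i = x i" and h: "h \<in> H" "\<forall>i<n. h i = y i"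
      using x y unfolding prefix_closure_iff by blast
    show "\<exists>h\<in>H. \<forall>i<n. h i = x i + y i"
      by (rule bexI[OF _ add_subgroup_add[OF H g(1) h(1)]]) (use g(2) h(2) in simp)
  qed
  show "(\<lambda>i. - x i) \<in> prefix_closure H" if x: "x \<in> prefix_closure H" for x
    unfolding prefix_closure_iff
  proof
    fix n
    obtain g where g: "g \<in> H" "\<forall>i<n. g i = x i"
      using x unfolding prefix_closure_iff by blast
    show "\<exists>h\<in>H. \<forall>i<n. h i = - x i"
      by (rule bexI[OF _ add_subgroup_uminus[OF H g(1)]]) (use g(2) in simp)
  qed
qed

lemma
  shows add_subgroup_closed_subgroup_gen: "add_subgroup (closed_subgroup_gen S)"
    and closed_subgroup_gen_prefix_closed:
      "prefix_closure (closed_subgroup_gen S) \<subseteq> closed_subgroup_gen S"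
    and closed_subgroup_gen_superset: "S \<subseteq> closed_subgroup_gen S"
proof -
  let ?K = "{H. add_subgroup H \<and> closedin seq_top H \<and> S \<subseteq> H}"
  have "UNIV \<in> ?K"
    using closedin_topspace[of seq_top] by (auto simp: add_subgroup_def)
  then have "closedin seq_top (\<Inter>?K)"
    by (intro closedin_Inter) auto
  then show "prefix_closure (closed_subgroup_gen S) \<subseteq> closed_subgroup_gen S"
    by (simp add: closed_subgroup_gen_def closedin_seq_top_iff)
  show "add_subgroup (closed_subgroup_gen S)"
    by (auto simp: closed_subgroup_gen_def add_subgroup_def)
  show "S \<subseteq> closed_subgroup_gen S"
    by (auto simp: closed_subgroup_gen_def)
qed

lemma closed_subgroup_gen_least:
  "add_subgroup H \<Longrightarrow> prefix_closure H \<subseteq> H \<Longrightarrow> S \<subseteq> H \<Longrightarrow> closed_subgroup_gen S \<subseteq> H"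
  by (auto simp: closed_subgroup_gen_def closedin_seq_top_iff)

definition seq_additive :: "((nat \<Rightarrow> 'a::ab_group_add) \<Rightarrow> nat \<Rightarrow> 'b::ab_group_add) \<Rightarrow> bool" where
  "seq_additive F \<longleftrightarrow> (\<forall>x y. F (\<lambda>i. x i + y i) = (\<lambda>i. F x i + F y i))"

definition prefix_continuous :: "((nat \<Rightarrow> 'a) \<Rightarrow> nat \<Rightarrow> 'b) \<Rightarrow> bool" where
  "prefix_continuous F \<longleftrightarrow> (\<forall>n. \<exists>m. \<forall>x y. (\<forall>i<m. x i = y i) \<longrightarrow> (\<forall>i<n. F x i = F y i))"

lemma seq_additiveD: "seq_additive F \<Longrightarrow> F (\<lambda>i. x i + y i) = (\<lambda>i. F x i + F y i)"
  by (simp add: seq_additive_def)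

lemma seq_additive_zero:
  assumes "seq_additive F"
  shows "F (\<lambda>_. 0) = (\<lambda>_. 0)"
  using seq_additiveD[OF assms, of "\<lambda>_. 0" "\<lambda>_. 0"] by (simp add: fun_eq_iff)

lemma seq_additive_uminus:
  assumes "seq_additive F"
  shows "F (\<lambda>i. - x i) = (\<lambda>i. - F x i)"
  using seq_additiveD[OF assms, of x "\<lambda>i. - x i"] seq_additive_zero[OF assms]
  by (simp add: fun_eq_iff eq_neg_iff_add_eq_0 add.commute)

lemma seq_additive_diff:
  assumes "seq_additive F"
  shows "F (\<lambda>i. x i - y i) = (\<lambda>i. F x i - F y i)"
  using seq_additiveD[OF assms, of x "\<lambda>i. - y i"] seq_additive_uminus[OF assms, of y] by simp

lemma add_subgroup_vimage: "seq_additive F \<Longrightarrow> add_subgroup H \<Longrightarrow> add_subgroup (F -` H)"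
  by (simp add: add_subgroup_def seq_additive_zero seq_additiveD seq_additive_uminus)

lemma prefix_closure_vimage:
  assumes F: "prefix_continuous F"
  shows "prefix_closure (F -` H) \<subseteq> F -` prefix_closure H"
proof
  fix x assume x: "x \<in> prefix_closure (F -` H)"
  have "\<exists>h\<in>H. \<forall>i<n. h i = F x i" for n
  proof -
    obtain m where m: "\<forall>x y. (\<forall>i<m. x i = y i) \<longrightarrow> (\<forall>i<n. F x i = F y i)"
      using F unfolding prefix_continuous_def by blast
    obtain h where "F h \<in> H" "\<forall>i<m. h i = x i"
      using x by (auto simp: prefix_closure_iff)
    with m show ?thesis
      by blast
  qed
  then show "x \<in> F -` prefix_closure H"
    by (simp add: prefix_closure_iff)
qed

lemma closed_subgroup_gen_image_subset:
  assumes "seq_additive F" "prefix_continuous F" "F ` S \<subseteq> closed_subgroup_gen T"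
  shows "F ` closed_subgroup_gen S \<subseteq> closed_subgroup_gen T"
proof -
  let ?H = "F -` closed_subgroup_gen T"
  have "prefix_closure ?H \<subseteq> ?H"
    using prefix_closure_vimage[OF assms(2)] closed_subgroup_gen_prefix_closed by blast
  then have "closed_subgroup_gen S \<subseteq> ?H"
    using add_subgroup_vimage[OF assms(1) add_subgroup_closed_subgroup_gen] assms(3)
    by (intro closed_subgroup_gen_least) auto
  then show ?thesis
    by blast
qed


section \<open>The groups \<open>X(A)\<close> and \<open>X\<^sub>I(A)\<close>\<close>

lemma seqV_funpow: "(seqV p ^^ n) x i = (if i < n then 0 else of_nat p ^ n * x (i - n))"
proof (induction n arbitrary: i)
  case (Suc n)
  then show ?case
    by (cases i) (simp_all add: seqV_def)
qed simp

lemma funpow_seqV_zero: "(seqV p ^^ n) (\<lambda>_. 0) = (\<lambda>_. 0)"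
  by (simp add: fun_eq_iff seqV_funpow)

lemma seq_additive_seqV: "seq_additive (seqV p)"
  by (simp add: seq_additive_def seqV_def fun_eq_iff distrib_left)

lemma prefix_continuous_seqV: "prefix_continuous (seqV p)"
  unfolding prefix_continuous_def seqV_def by (metis less_imp_diff_less)

lemma seqV_diff: "seqV p (\<lambda>i. x i - y i) = (\<lambda>i. seqV p x i - seqV p y i)"
  by (rule seq_additive_diff[OF seq_additive_seqV])

lemma Xgrp_generator: "(seqV p ^^ n) (teich p b) \<in> Xgrp p"
  unfolding Xgrp_def by (auto intro!: closed_subgroup_gen_superset[THEN subsetD])

lemma XIgrp_generator:
  "a - b \<in> Iker \<Longrightarrow> (\<lambda>i. (seqV p ^^ n) (teich p a) i - (seqV p ^^ n) (teich p b) i) \<in> XIgrp p"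
  unfolding XIgrp_def by (auto intro!: closed_subgroup_gen_superset[THEN subsetD])

lemma add_subgroup_Xgrp: "add_subgroup (Xgrp p)"
  unfolding Xgrp_def by (rule add_subgroup_closed_subgroup_gen)

lemma add_subgroup_XIgrp: "add_subgroup (XIgrp p)"
  unfolding XIgrp_def by (rule add_subgroup_closed_subgroup_gen)

lemmas Xgrp_zero = add_subgroup_zero[OF add_subgroup_Xgrp]
lemmas Xgrp_add = add_subgroup_add[OF add_subgroup_Xgrp]
lemmas Xgrp_uminus = add_subgroup_uminus[OF add_subgroup_Xgrp]
lemmas Xgrp_of_nat_mult = add_subgroup_of_nat_mult[OF add_subgroup_Xgrp]
lemmas XIgrp_zero = add_subgroup_zero[OF add_subgroup_XIgrp]
lemmas XIgrp_add = add_subgroup_add[OF add_subgroup_XIgrp]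
lemmas XIgrp_uminus = add_subgroup_uminus[OF add_subgroup_XIgrp]
lemmas XIgrp_diff = add_subgroup_diff[OF add_subgroup_XIgrp]
lemmas XIgrp_of_nat_mult = add_subgroup_of_nat_mult[OF add_subgroup_XIgrp]

lemma Xgrp_prefix_closed: "prefix_closure (Xgrp p) \<subseteq> Xgrp p"
  unfolding Xgrp_def by (rule closed_subgroup_gen_prefix_closed)

lemma XIgrp_prefix_closed: "prefix_closure (XIgrp p) \<subseteq> XIgrp p"
  unfolding XIgrp_def by (rule closed_subgroup_gen_prefix_closed)

lemma Xgrp_least:
  assumes "add_subgroup H" "prefix_closure H \<subseteq> H" "\<And>n b. (seqV p ^^ n) (teich p b) \<in> H"
  shows "Xgrp p \<subseteq> H"
  unfolding Xgrp_def by (rule closed_subgroup_gen_least[OF assms(1,2)]) (use assms(3) in blast)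

lemma XIgrp_least:
  assumes "add_subgroup H" "prefix_closure H \<subseteq> H"
    and "\<And>n a b. a - b \<in> Iker \<Longrightarrow> (\<lambda>i. (seqV p ^^ n) (teich p a) i - (seqV p ^^ n) (teich p b) i) \<in> H"
  shows "XIgrp p \<subseteq> H"
  unfolding XIgrp_def by (rule closed_subgroup_gen_least[OF assms(1,2)]) (use assms(3) in blast)

lemma seqV_Xgrp:
  assumes "x \<in> Xgrp p"
  shows "seqV p x \<in> Xgrp p"
proof -
  have "seqV p ` Xgrp p \<subseteq> Xgrp p"
    unfolding Xgrp_def
    by (rule closed_subgroup_gen_image_subset[OF seq_additive_seqV prefix_continuous_seqV])
       (use Xgrp_generator[of "Suc n" p b for n b] in \<open>auto simp: Xgrp_def\<close>)
  with assms show ?thesis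
    by blast
qed

lemma seqV_XIgrp:
  assumes "x \<in> XIgrp p"
  shows "seqV p x \<in> XIgrp p"
proof -
  have "seqV p ` XIgrp p \<subseteq> XIgrp p"
    unfolding XIgrp_def
    by (rule closed_subgroup_gen_image_subset[OF seq_additive_seqV prefix_continuous_seqV])
       (use XIgrp_generator[where n = "Suc m" and p = p for m] in \<open>auto simp: XIgrp_def seqV_diff\<close>)
  with assms show ?thesis
    by blast
qed

lemma funpow_seqV_Xgrp: "x \<in> Xgrp p \<Longrightarrow> (seqV p ^^ n) x \<in> Xgrp p"
  by (induction n) (simp_all add: seqV_Xgrp)

lemma XIgrp_subset_Xgrp: "XIgrp p \<subseteq> Xgrp p"
  by (rule XIgrp_least[OF add_subgroup_Xgrp Xgrp_prefix_closed])
     (intro add_subgroup_diff[OF add_subgroup_Xgrp] Xgrp_generator)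


section \<open>The quotient group \<open>E(R)\<close>\<close>

lemma Ecos_iff: "z \<in> Ecos p c \<longleftrightarrow> (\<lambda>i. z i - c i) \<in> XIgrp p"
proof
  assume "z \<in> Ecos p c"
  then show "(\<lambda>i. z i - c i) \<in> XIgrp p"
    by (auto simp: Ecos_def)
next
  assume "(\<lambda>i. z i - c i) \<in> XIgrp p"
  then show "z \<in> Ecos p c"
    unfolding Ecos_def by (rule rev_image_eqI) simp
qed

lemma Ecos_self: "c \<in> Ecos p c"
  using XIgrp_zero by (simp add: Ecos_iff)

lemma Ecos_eq_iff: "Ecos p c = Ecos p d \<longleftrightarrow> (\<lambda>i. c i - d i) \<in> XIgrp p"
proof
  assume "Ecos p c = Ecos p d"
  then show "(\<lambda>i. c i - d i) \<in> XIgrp p"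
    using Ecos_self[of c p] by (simp add: Ecos_iff)
next
  assume cd: "(\<lambda>i. c i - d i) \<in> XIgrp p"
  have "(\<lambda>i. z i - c i) \<in> XIgrp p \<longleftrightarrow> (\<lambda>i. z i - d i) \<in> XIgrp p" for z
    using XIgrp_add[OF _ cd, of "\<lambda>i. z i - c i"] XIgrp_diff[OF _ cd, of "\<lambda>i. z i - d i"]
    by auto
  then show "Ecos p c = Ecos p d"
    by (auto simp: Ecos_iff)
qed

lemma Ecos_eq_of_mem: "z \<in> Ecos p c \<Longrightarrow> Ecos p c = Ecos p z"
  unfolding Ecos_eq_iff Ecos_iff by (drule XIgrp_uminus) simp

lemma carrier_E: "carrier (E p) = Ecos p ` Xgrp p"
  by (simp add: E_def)

lemma one_E: "\<one>\<^bsub>E p\<^esub> = Ecos p (\<lambda>_. 0)"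
proof -
  have "XIgrp p = Ecos p (\<lambda>_. 0)"
    by (auto simp: Ecos_iff)
  then show ?thesis
    by (simp add: E_def)
qed

lemma mult_E_Ecos: "Ecos p c \<otimes>\<^bsub>E p\<^esub> Ecos p d = Ecos p (\<lambda>i. c i + d i)"
proof (intro Set.set_eqI iffI)
  fix z assume "z \<in> Ecos p c \<otimes>\<^bsub>E p\<^esub> Ecos p d"
  then obtain c' d' where z: "z = (\<lambda>i. c' i + d' i)" and "c' \<in> Ecos p c" "d' \<in> Ecos p d"
    by (auto simp: E_def)
  moreover have "(\<lambda>i. z i - (c i + d i)) = (\<lambda>i. (c' i - c i) + (d' i - d i))"
    by (simp add: z algebra_simps)
  ultimately show "z \<in> Ecos p (\<lambda>i. c i + d i)"
    by (simp add: Ecos_iff XIgrp_add)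
next
  fix z assume "z \<in> Ecos p (\<lambda>i. c i + d i)"
  then have "(\<lambda>i. z i - d i) \<in> Ecos p c"
    by (simp add: Ecos_iff algebra_simps)
  then have "\<exists>c' d'. z = (\<lambda>i. c' i + d' i) \<and> c' \<in> Ecos p c \<and> d' \<in> Ecos p d"
    using Ecos_self[of d p] by (intro exI[of _ "\<lambda>i. z i - d i"] exI[of _ d]) simp
  then show "z \<in> Ecos p c \<otimes>\<^bsub>E p\<^esub> Ecos p d"
    by (simp add: E_def)
qed

lemma comm_group_E: "comm_group (E p :: ('r::comm_ring_1) Eelt monoid)"
proof (rule comm_groupI)
  fix x y z :: "'r Eelt"
  assume x: "x \<in> carrier (E p)" and y: "y \<in> carrier (E p)" and z: "z \<in> carrier (E p)"
  show "x \<otimes>\<^bsub>E p\<^esub> y \<in> carrier (E p)"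
    using x y by (auto simp: carrier_E mult_E_Ecos intro: Xgrp_add)
  show "x \<otimes>\<^bsub>E p\<^esub> y \<otimes>\<^bsub>E p\<^esub> z = x \<otimes>\<^bsub>E p\<^esub> (y \<otimes>\<^bsub>E p\<^esub> z)"
    using x y z by (auto simp: carrier_E mult_E_Ecos add.assoc)
  show "x \<otimes>\<^bsub>E p\<^esub> y = y \<otimes>\<^bsub>E p\<^esub> x"
    using x y by (auto simp: carrier_E mult_E_Ecos add.commute)
  show "\<one>\<^bsub>E p\<^esub> \<otimes>\<^bsub>E p\<^esub> x = x"
    using x by (auto simp: carrier_E mult_E_Ecos one_E)
  show "\<exists>y\<in>carrier (E p). y \<otimes>\<^bsub>E p\<^esub> x = \<one>\<^bsub>E p\<^esub>"
  proof -
    obtain c where "c \<in> Xgrp p" "x = Ecos p c"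
      using x by (auto simp: carrier_E)
    then show ?thesis
      by (intro bexI[of _ "Ecos p (\<lambda>i. - c i)"]) (auto simp: carrier_E mult_E_Ecos one_E intro: Xgrp_uminus)
  qed
next
  show "\<one>\<^bsub>E p\<^esub> \<in> carrier (E p)"
    using Xgrp_zero by (auto simp: carrier_E one_E)
qed

lemma group_E: "group (E p)"
  using comm_group_E comm_group.axioms(2) by blast

lemma inv_E_Ecos: "c \<in> Xgrp p \<Longrightarrow> inv\<^bsub>E p\<^esub> (Ecos p c) = Ecos p (\<lambda>i. - c i)"
  by (rule group.inv_equality[OF group_E]) (auto simp: carrier_E mult_E_Ecos one_E intro: Xgrp_uminus)

lemma pow_E_Ecos: "Ecos p c [^]\<^bsub>E p\<^esub> (n::nat) = Ecos p (\<lambda>i. of_nat n * c i)"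
  by (induction n) (simp_all add: one_E mult_E_Ecos algebra_simps)

text \<open>\<open>V\<close> on \<open>E(R)\<close> and the maps \<open>E(f)\<close> are both induced by additive maps of sequences that
  preserve \<open>X\<^sub>I\<close>.\<close>

lemma induced_Ecos:
  assumes F: "seq_additive F" and FI: "\<And>x. x \<in> XIgrp p \<Longrightarrow> F x \<in> XIgrp p"
  shows "{(\<lambda>i. F c' i + y i) | c' y. c' \<in> Ecos p c \<and> y \<in> XIgrp p} = Ecos p (F c)"
proof (intro Set.set_eqI iffI)
  fix z assume "z \<in> {(\<lambda>i. F c' i + y i) | c' y. c' \<in> Ecos p c \<and> y \<in> XIgrp p}"
  then obtain c' y where z: "z = (\<lambda>i. F c' i + y i)" and "c' \<in> Ecos p c" "y \<in> XIgrp p"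
    by blast
  moreover have "(\<lambda>i. z i - F c i) = (\<lambda>i. F (\<lambda>i. c' i - c i) i + y i)"
    by (simp add: z seq_additive_diff[OF F] algebra_simps)
  ultimately show "z \<in> Ecos p (F c)"
    by (simp add: Ecos_iff XIgrp_add FI)
next
  fix z assume "z \<in> Ecos p (F c)"
  then have "(\<lambda>i. z i - F c i) \<in> XIgrp p"
    by (simp add: Ecos_iff)
  then show "z \<in> {(\<lambda>i. F c' i + y i) | c' y. c' \<in> Ecos p c \<and> y \<in> XIgrp p}"
    using Ecos_self[of c p] by (auto intro!: exI[of _ c] exI[of _ "\<lambda>i. z i - F c i"])
qed

lemma EV_Ecos: "EV p (Ecos p c) = Ecos p (seqV p c)"
  unfolding EV_def by (rule induced_Ecos[OF seq_additive_seqV seqV_XIgrp])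

lemma funpow_EV_Ecos: "(EV p ^^ n) (Ecos p c) = Ecos p ((seqV p ^^ n) c)"
  by (induction n) (simp_all add: EV_Ecos)

lemma EV_hom: "EV p \<in> hom (E p) (E p)"
  by (rule homI) (auto simp: carrier_E EV_Ecos mult_E_Ecos seqV_Xgrp Xgrp_add seq_additiveD[OF seq_additive_seqV])

lemma Eteich_carrier: "Eteich p x \<in> carrier (E p)"
  using Xgrp_generator[of 0 p "pvar x"] by (auto simp: Eteich_def carrier_E)


section \<open>Functoriality\<close>

definition Zmap_seq :: "('r \<Rightarrow> 's) \<Rightarrow> (nat \<Rightarrow> 'r zpoly) \<Rightarrow> nat \<Rightarrow> 's zpoly" where
  "Zmap_seq f c = (\<lambda>i. Zmap f (c i))"

lemma seq_additive_Zmap_seq: "seq_additive (Zmap_seq f)"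
  by (simp add: seq_additive_def Zmap_seq_def cring_hom_add[OF cring_hom_Zmap])

lemma prefix_continuous_Zmap_seq: "prefix_continuous (Zmap_seq f)"
  unfolding prefix_continuous_def Zmap_seq_def by metis

lemma Zmap_seq_funpow_seqV: "Zmap_seq f ((seqV p ^^ n) x) = (seqV p ^^ n) (Zmap_seq f x)"
  by (simp add: Zmap_seq_def fun_eq_iff seqV_funpow cring_hom_zero[OF cring_hom_Zmap]
      cring_hom_mult[OF cring_hom_Zmap] cring_hom_power[OF cring_hom_Zmap] cring_hom_of_nat[OF cring_hom_Zmap])

lemma Zmap_seq_seqV: "Zmap_seq f (seqV p x) = seqV p (Zmap_seq f x)"
  using Zmap_seq_funpow_seqV[where n = 1] by simp

lemma Zmap_seq_teich: "Zmap_seq f (teich p b) = teich p (Zmap f b)"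
  by (simp add: Zmap_seq_def teich_def fun_eq_iff cring_hom_power[OF cring_hom_Zmap])

lemma Zmap_seq_Xgrp:
  assumes "c \<in> Xgrp p"
  shows "Zmap_seq f c \<in> Xgrp p"
proof -
  have "Zmap_seq f ` Xgrp p \<subseteq> Xgrp p"
    unfolding Xgrp_def
    by (rule closed_subgroup_gen_image_subset[OF seq_additive_Zmap_seq prefix_continuous_Zmap_seq])
       (use Xgrp_generator in \<open>auto simp: Xgrp_def Zmap_seq_funpow_seqV Zmap_seq_teich\<close>)
  with assms show ?thesis
    by blast
qed

lemma Zmap_seq_XIgrp:
  fixes f :: "'r::comm_ring_1 \<Rightarrow> 's::comm_ring_1"
  assumes f: "cring_hom f" and c: "c \<in> XIgrp p"
  shows "Zmap_seq f c \<in> XIgrp p"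
proof -
  have Iker: "Zmap f a - Zmap f b \<in> Iker" if "a - b \<in> Iker" for a b :: "'r zpoly"
    using that by (simp add: Iker_def peval_id_Zmap[OF f] cring_hom_diff[OF cring_hom_Zmap, symmetric]
        cring_hom_zero[OF f])
  have gen: "(\<lambda>i. (seqV p ^^ n) (teich p (Zmap f a)) i - (seqV p ^^ n) (teich p (Zmap f b)) i)
      \<in> XIgrp p" if "a - b \<in> Iker" for n and a b :: "'r zpoly"
    by (rule XIgrp_generator) (rule Iker[OF that])
  have "Zmap_seq f ` XIgrp p \<subseteq> (XIgrp p :: (nat \<Rightarrow> 's zpoly) set)"
    unfolding XIgrp_def
    by (rule closed_subgroup_gen_image_subset[OF seq_additive_Zmap_seq prefix_continuous_Zmap_seq])
       (use gen in \<open>auto simp: XIgrp_def Zmap_seq_funpow_seqV Zmap_seq_teich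
          seq_additive_diff[OF seq_additive_Zmap_seq]\<close>)
  with c show ?thesis
    by blast
qed

lemma Emap_Ecos: "cring_hom f \<Longrightarrow> Emap p f (Ecos p c) = Ecos p (Zmap_seq f c)"
  using induced_Ecos[OF seq_additive_Zmap_seq Zmap_seq_XIgrp] by (simp add: Emap_def Zmap_seq_def)

lemma Emap_hom: "cring_hom f \<Longrightarrow> Emap p f \<in> hom (E p) (E p)"
  by (rule homI)
     (auto simp: carrier_E Emap_Ecos mult_E_Ecos Zmap_seq_Xgrp Xgrp_add seq_additiveD[OF seq_additive_Zmap_seq])

lemma Emap_EV: "cring_hom f \<Longrightarrow> C \<in> carrier (E p) \<Longrightarrow> Emap p f (EV p C) = EV p (Emap p f C)"
  by (auto simp: carrier_E Emap_Ecos EV_Ecos Zmap_seq_seqV)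

lemma Emap_Eteich: "cring_hom f \<Longrightarrow> Emap p f (Eteich p x) = Eteich p (f x)"
  by (simp add: Eteich_def Emap_Ecos Zmap_seq_teich)

lemma Emap_id: "C \<in> carrier (E p) \<Longrightarrow> Emap p id C = C"
  by (auto simp: carrier_E Emap_Ecos[OF cring_hom_id] Zmap_seq_def Zmap_id)

lemma Emap_comp:
  "cring_hom f \<Longrightarrow> cring_hom g \<Longrightarrow> C \<in> carrier (E p) \<Longrightarrow> Emap p (g \<circ> f) C = Emap p g (Emap p f C)"
  by (auto simp: carrier_E Emap_Ecos cring_hom_comp Zmap_seq_def Zmap_comp)


section \<open>The axioms (1) and (2)\<close>

lemma Iker_iff: "a \<in> Iker \<longleftrightarrow> peval id a = 0"
  by (simp add: Iker_def)

lemma teich_zero: "p > 0 \<Longrightarrow> teich p 0 = (\<lambda>_. 0)"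
  by (simp add: teich_def fun_eq_iff power_0_left)

lemma teich_XIgrp:
  assumes "p > 0" "a \<in> Iker"
  shows "teich p a \<in> XIgrp p"
  using XIgrp_generator[where a = a and b = 0 and n = 0 and p = p] assms by (simp add: teich_zero)

lemma Eteich_zero:
  assumes "p > 0"
  shows "Eteich p 0 = \<one>\<^bsub>E p\<^esub>"
  using teich_XIgrp[OF assms, of "pvar 0"] by (simp add: Iker_iff Eteich_def one_E Ecos_eq_iff)

lemma Eteich_uminus:
  assumes "odd p"
  shows "Eteich p (- x) = inv\<^bsub>E p\<^esub> (Eteich p x)"
proof -
  have "pvar (- x) - (- pvar x) \<in> Iker"
    by (simp add: Iker_iff peval_diff peval_uminus peval_add)
  from XIgrp_generator[OF this, where n = 0 and p = p]
  have "(\<lambda>i. teich p (pvar (- x)) i - - teich p (pvar x) i) \<in> XIgrp p"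
    using assms by (simp add: teich_def power_minus_odd)
  then show ?thesis
    using Xgrp_generator[of 0 p "pvar x"] by (simp add: Eteich_def inv_E_Ecos Ecos_eq_iff)
qed

lemma seqV_teich_power:
  "seqV p (teich p (u ^ p)) i = of_nat p * teich p u i - (if i = 0 then of_nat p * u else 0)"
  by (cases i) (simp_all add: seqV_def teich_def power_mult[symmetric] mult.commute)

text \<open>Modulo \<open>X\<^sub>I(A)\<close> we may replace \<open>V\<langle>[x\<^sup>p]\<rangle>\<close> by \<open>V\<langle>[x]\<^sup>p\<rangle>\<close>, and
  \<open>V\<langle>[x]\<^sup>p\<rangle> - p\<langle>[x]\<rangle> = (-p[x], 0, 0, \<dots>)\<close> holds already in \<open>A\<^sup>\<nat>\<close>.\<close>

lemma EV_Eteich_power_minus: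
  "EV p (Eteich p (z ^ p)) \<otimes>\<^bsub>E p\<^esub> inv\<^bsub>E p\<^esub> (Eteich p z [^]\<^bsub>E p\<^esub> p)
     = Ecos p (\<lambda>i. if i = 0 then - (of_nat p * pvar z) else 0)"
proof -
  have t: "teich p (pvar z) \<in> Xgrp p"
    using Xgrp_generator[of 0 p "pvar z"] by simp
  have "EV p (Eteich p (z ^ p)) \<otimes>\<^bsub>E p\<^esub> inv\<^bsub>E p\<^esub> (Eteich p z [^]\<^bsub>E p\<^esub> p)
      = Ecos p (\<lambda>i. seqV p (teich p (pvar (z ^ p))) i + - (of_nat p * teich p (pvar z) i))"
    by (simp only: Eteich_def pow_E_Ecos inv_E_Ecos[OF Xgrp_of_nat_mult[OF t]] EV_Ecos mult_E_Ecos)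
  also have "\<dots> = Ecos p (\<lambda>i. if i = 0 then - (of_nat p * pvar z) else 0)"
  proof -
    have "pvar (z ^ p) - pvar z ^ p \<in> Iker"
      by (simp add: Iker_iff peval_diff peval_power)
    from XIgrp_generator[OF this, where n = 1 and p = p]
    have "(\<lambda>i. seqV p (teich p (pvar (z ^ p))) i - seqV p (teich p (pvar z ^ p)) i) \<in> XIgrp p"
      by simp
    moreover have "(\<lambda>i. seqV p (teich p (pvar (z ^ p))) i - seqV p (teich p (pvar z ^ p)) i)
        = (\<lambda>i. (seqV p (teich p (pvar (z ^ p))) i + - (of_nat p * teich p (pvar z) i))
               - (if i = 0 then - (of_nat p * pvar z) else 0))"
      by (simp add: fun_eq_iff seqV_teich_power algebra_simps)
    ultimately show ?thesis
      by (simp only: Ecos_eq_iff)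
  qed
  finally show ?thesis .
qed

lemma XIgrp_delta:
  assumes "p > 0" "c \<in> Iker"
  shows "(\<lambda>i. if i = 0 then of_nat p * c else 0) \<in> XIgrp p"
proof -
  have "c ^ p \<in> Iker"
    using assms by (simp add: Iker_iff peval_power power_0_left)
  with assms have "(\<lambda>i. of_nat p * teich p c i - seqV p (teich p (c ^ p)) i) \<in> XIgrp p"
    by (auto intro!: XIgrp_diff XIgrp_of_nat_mult seqV_XIgrp teich_XIgrp)
  moreover have "(\<lambda>i. of_nat p * teich p c i - seqV p (teich p (c ^ p)) i)
      = (\<lambda>i. if i = 0 then of_nat p * c else 0)"
    by (simp add: fun_eq_iff seqV_teich_power algebra_simps)
  ultimately show ?thesis
    by simp
qed

lemma EV_Eteich_additive:
  fixes x y :: "'r::comm_ring_1"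
  assumes "p > 0"
  shows "EV p (Eteich p ((x + y) ^ p)) \<otimes>\<^bsub>E p\<^esub> inv\<^bsub>E p\<^esub> (Eteich p (x + y) [^]\<^bsub>E p\<^esub> p)
        = (EV p (Eteich p (x ^ p)) \<otimes>\<^bsub>E p\<^esub> inv\<^bsub>E p\<^esub> (Eteich p x [^]\<^bsub>E p\<^esub> p))
          \<otimes>\<^bsub>E p\<^esub> (EV p (Eteich p (y ^ p)) \<otimes>\<^bsub>E p\<^esub> inv\<^bsub>E p\<^esub> (Eteich p y [^]\<^bsub>E p\<^esub> p))"
proof -
  have "pvar (x + y) - pvar x - pvar y \<in> Iker"
    by (simp add: Iker_iff peval_diff)
  from XIgrp_uminus[OF XIgrp_delta[OF assms this]]
  have delta: "(\<lambda>i. - (if i = 0 then of_nat p * (pvar (x + y) - pvar x - pvar y) else 0)) \<in> XIgrp p" .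
  have "(\<lambda>i. - (if i = 0 then of_nat p * (pvar (x + y) - pvar x - pvar y) else 0))
      = (\<lambda>i. (if i = 0 then - (of_nat p * pvar (x + y)) else 0)
           - ((if i = 0 then - (of_nat p * pvar x) else 0) + (if i = 0 then - (of_nat p * pvar y) else 0)))"
    by (simp add: fun_eq_iff algebra_simps)
  from this delta have "(\<lambda>i. (if i = 0 then - (of_nat p * pvar (x + y)) else 0)
      - ((if i = 0 then - (of_nat p * pvar x) else 0) + (if i = 0 then - (of_nat p * pvar y) else 0)))
      \<in> XIgrp p"
    by (rule subst[where P = "\<lambda>f. f \<in> XIgrp p"])
  then show ?thesis
    by (simp only: EV_Eteich_power_minus mult_E_Ecos Ecos_eq_iff)
qed


section \<open>Completeness\<close>

text \<open>\<open>V\<^sup>k z\<^sub>k\<close> vanishes in the entries below \<open>k\<close>, so the series \<open>\<Sum>\<^sub>k V\<^sup>k z\<^sub>k\<close> is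
  a finite sum in each entry.\<close>

definition partial_Vsum :: "nat \<Rightarrow> (nat \<Rightarrow> nat \<Rightarrow> 'b::comm_ring_1) \<Rightarrow> nat \<Rightarrow> nat \<Rightarrow> 'b" where
  "partial_Vsum p z m = (\<lambda>i. \<Sum>k<m. (seqV p ^^ k) (z k) i)"

definition Vsum :: "nat \<Rightarrow> (nat \<Rightarrow> nat \<Rightarrow> 'b::comm_ring_1) \<Rightarrow> nat \<Rightarrow> 'b" where
  "Vsum p z = (\<lambda>i. partial_Vsum p z (Suc i) i)"

lemma partial_Vsum_eq_Vsum: "i < m \<Longrightarrow> partial_Vsum p z m i = Vsum p z i"
  unfolding Vsum_def partial_Vsum_def
  by (rule sum.mono_neutral_right) (auto simp: seqV_funpow)

lemma partial_Vsum_Xgrp: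
  assumes "\<And>k. z k \<in> Xgrp p"
  shows "partial_Vsum p z m \<in> Xgrp p"
proof (induction m)
  case 0
  show ?case
    by (simp add: partial_Vsum_def Xgrp_zero)
next
  case (Suc m)
  have "(\<lambda>i. partial_Vsum p z m i + (seqV p ^^ m) (z m) i) \<in> Xgrp p"
    using Suc.IH funpow_seqV_Xgrp[OF assms] by (rule Xgrp_add)
  then show ?case
    by (simp add: partial_Vsum_def)
qed

lemma Vsum_Xgrp:
  assumes "\<And>k. z k \<in> Xgrp p"
  shows "Vsum p z \<in> Xgrp p"
proof -
  have "Vsum p z \<in> prefix_closure (Xgrp p)"
    unfolding prefix_closure_iff
  proof
    fix n
    show "\<exists>h\<in>Xgrp p. \<forall>i<n. h i = Vsum p z i"
      by (intro bexI[OF _ partial_Vsum_Xgrp[where z = z and m = n, OF assms]]) (simp add: partial_Vsum_eq_Vsum)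
  qed
  then show ?thesis
    using Xgrp_prefix_closed by blast
qed

lemma Vsum_minus_partial_Vsum:
  "(\<lambda>i. Vsum p z i - partial_Vsum p z n i) = (seqV p ^^ n) (Vsum p (\<lambda>k. z (n + k)))"
proof
  fix i
  show "Vsum p z i - partial_Vsum p z n i = (seqV p ^^ n) (Vsum p (\<lambda>k. z (n + k))) i"
  proof (cases "i < n")
    case True
    then show ?thesis
      by (simp add: partial_Vsum_eq_Vsum seqV_funpow)
  next
    case False
    then obtain j where i: "i = n + j"
      by (metis le_add_diff_inverse not_less)
    have "Vsum p z i = (\<Sum>k\<in>{0..<n}. (seqV p ^^ k) (z k) i) + (\<Sum>k\<in>{n..<Suc i}. (seqV p ^^ k) (z k) i)"
      unfolding Vsum_def partial_Vsum_def lessThan_atLeast0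
      by (rule sum.atLeastLessThan_concat[symmetric]) (use i in auto)
    also have "(\<Sum>k\<in>{0..<n}. (seqV p ^^ k) (z k) i) = partial_Vsum p z n i"
      by (simp add: partial_Vsum_def lessThan_atLeast0)
    also have "(\<Sum>k\<in>{n..<Suc i}. (seqV p ^^ k) (z k) i)
        = (\<Sum>k\<in>{0..<Suc j}. (seqV p ^^ (k + n)) (z (k + n)) i)"
      using sum.shift_bounds_nat_ivl[of "\<lambda>k. (seqV p ^^ k) (z k) i" 0 n "Suc j"]
      by (simp add: i add.commute)
    also have "\<dots> = (seqV p ^^ n) (Vsum p (\<lambda>k. z (n + k))) i"
      by (simp add: seqV_funpow Vsum_def partial_Vsum_def i lessThan_atLeast0 power_add add.commute)
         (simp add: distrib_left sum_distrib_left mult_ac)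
    finally show ?thesis
      by simp
  qed
qed

lemma Inter_funpow_EV_image: "(\<Inter>n. (EV p ^^ n) ` carrier (E p :: ('r::comm_ring_1) Eelt monoid)) = {\<one>\<^bsub>E p\<^esub>}"
proof
  have "(EV p ^^ n) \<one>\<^bsub>E p\<^esub> = \<one>\<^bsub>E p\<^esub>" for n
    by (simp add: one_E funpow_EV_Ecos funpow_seqV_zero)
  then have "\<one>\<^bsub>E p\<^esub> \<in> (EV p ^^ n) ` carrier (E p)" for n
    using monoid.one_closed[OF group.is_monoid[OF group_E]] by (metis image_eqI)
  then show "{\<one>\<^bsub>E p\<^esub>} \<subseteq> (\<Inter>n. (EV p ^^ n) ` carrier (E p))"
    by blast
next
  show "(\<Inter>n. (EV p ^^ n) ` carrier (E p :: 'r Eelt monoid)) \<subseteq> {\<one>\<^bsub>E p\<^esub>}"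
  proof
    fix C :: "'r Eelt"
    assume C: "C \<in> (\<Inter>n. (EV p ^^ n) ` carrier (E p))"
    then have "C \<in> (EV p ^^ 0) ` carrier (E p)"
      by blast
    then obtain c where c: "c \<in> Xgrp p" "C = Ecos p c"
      by (auto simp: carrier_E)
    have "\<exists>h\<in>XIgrp p. \<forall>i<n. h i = c i" for n
    proof -
      from C have "C \<in> (EV p ^^ n) ` carrier (E p)"
        by blast
      then obtain w where "C = Ecos p ((seqV p ^^ n) w)"
        by (auto simp: carrier_E funpow_EV_Ecos)
      then have "(\<lambda>i. c i - (seqV p ^^ n) w i) \<in> XIgrp p"
        using c by (simp add: Ecos_eq_iff)
      then show ?thesis
        by (intro bexI) (auto simp: seqV_funpow)
    qed
    then have "c \<in> prefix_closure (XIgrp p)"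
      by (simp add: prefix_closure_iff)
    then have "c \<in> XIgrp p"
      using XIgrp_prefix_closed by blast
    then show "C \<in> {\<one>\<^bsub>E p\<^esub>}"
      using c by (simp add: one_E Ecos_eq_iff)
  qed
qed

lemma E_Cauchy_limit:
  assumes x: "\<And>n. x n \<in> carrier (E p)"
    and Cauchy: "\<And>n. x (Suc n) \<otimes>\<^bsub>E p\<^esub> inv\<^bsub>E p\<^esub> (x n) \<in> (EV p ^^ n) ` carrier (E p)"
  shows "\<exists>y\<in>carrier (E p). \<forall>n. y \<otimes>\<^bsub>E p\<^esub> inv\<^bsub>E p\<^esub> (x n) \<in> (EV p ^^ n) ` carrier (E p)"
proof -
  interpret G: group "E p"
    by (rule group_E)
  obtain c0 where c0: "c0 \<in> Xgrp p" "x 0 = Ecos p c0"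
    using x[of 0] by (auto simp: carrier_E)
  have "\<forall>n. \<exists>w. w \<in> Xgrp p \<and> x (Suc n) \<otimes>\<^bsub>E p\<^esub> inv\<^bsub>E p\<^esub> (x n) = Ecos p ((seqV p ^^ n) w)"
    using Cauchy by (fastforce simp: carrier_E funpow_EV_Ecos)
  then obtain z where z: "\<And>n. z n \<in> Xgrp p"
    and step: "\<And>n. x (Suc n) \<otimes>\<^bsub>E p\<^esub> inv\<^bsub>E p\<^esub> (x n) = Ecos p ((seqV p ^^ n) (z n))"
    by metis
  have x_eq: "x n = Ecos p (\<lambda>i. c0 i + partial_Vsum p z n i)" for n
  proof (induction n)
    case (Suc n)
    have "x (Suc n) = (x (Suc n) \<otimes>\<^bsub>E p\<^esub> inv\<^bsub>E p\<^esub> (x n)) \<otimes>\<^bsub>E p\<^esub> x n"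
      using x by (simp add: G.m_assoc)
    also have "\<dots> = Ecos p (\<lambda>i. c0 i + partial_Vsum p z (Suc n) i)"
      by (simp only: step) (simp add: Suc.IH mult_E_Ecos partial_Vsum_def algebra_simps)
    finally show ?case .
  qed (simp add: c0 partial_Vsum_def)
  let ?y = "Ecos p (\<lambda>i. c0 i + Vsum p z i)"
  have "?y \<otimes>\<^bsub>E p\<^esub> inv\<^bsub>E p\<^esub> (x n) \<in> (EV p ^^ n) ` carrier (E p)" for n
  proof -
    have "?y \<otimes>\<^bsub>E p\<^esub> inv\<^bsub>E p\<^esub> (x n) = Ecos p (\<lambda>i. Vsum p z i - partial_Vsum p z n i)"
      using Xgrp_add[OF c0(1) partial_Vsum_Xgrp[where z = z, OF z]]
      by (simp add: x_eq inv_E_Ecos mult_E_Ecos algebra_simps)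
    also have "\<dots> = (EV p ^^ n) (Ecos p (Vsum p (\<lambda>k. z (n + k))))"
      by (simp add: Vsum_minus_partial_Vsum funpow_EV_Ecos)
    finally show ?thesis
      using Vsum_Xgrp[of "\<lambda>k. z (n + k)" p] z by (auto simp: carrier_E)
  qed
  moreover have "?y \<in> carrier (E p)"
    using Xgrp_add[OF c0(1) Vsum_Xgrp[where z = z, OF z]] by (simp add: carrier_E)
  ultimately show ?thesis
    by blast
qed

lemma filt_complete_E: "filt_complete (E p :: ('r::comm_ring_1) Eelt monoid) (EV p)"
  unfolding filt_complete_def
proof (intro conjI allI impI)
  show "(\<Inter>n. (EV p ^^ n) ` carrier (E p)) = {\<one>\<^bsub>E p\<^esub>}"
    by (rule Inter_funpow_EV_image)
next
  fix x :: "nat \<Rightarrow> 'r Eelt"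
  assume x: "\<forall>n. x n \<in> carrier (E p)
    \<and> x (Suc n) \<otimes>\<^bsub>E p\<^esub> inv\<^bsub>E p\<^esub> (x n) \<in> (EV p ^^ n) ` carrier (E p)"
  show "\<exists>y\<in>carrier (E p). \<forall>n. y \<otimes>\<^bsub>E p\<^esub> inv\<^bsub>E p\<^esub> (x n) \<in> (EV p ^^ n) ` carrier (E p)"
    by (rule E_Cauchy_limit) (use x in auto)
qed


section \<open>Torsion-freeness\<close>

lemma of_nat_prime_dvd_power_add:
  fixes a b :: "'a::comm_ring_1"
  assumes p: "Factorial_Ring.prime p"
  shows "(of_nat p :: 'a) dvd ((a + b) ^ p - a ^ p - b ^ p)"
proof -
  let ?f = "\<lambda>k. of_nat (p choose k) * a ^ k * b ^ (p - k) :: 'a"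
  have p0: "p \<noteq> 0"
    using p by auto
  have "(a + b) ^ p = (\<Sum>k\<in>{..p}. ?f k)"
    by (rule binomial_ring)
  also have "\<dots> = (\<Sum>k\<in>{..p} - {0, p}. ?f k) + (\<Sum>k\<in>{0, p}. ?f k)"
    by (rule sum.subset_diff) auto
  also have "(\<Sum>k\<in>{0, p}. ?f k) = b ^ p + a ^ p"
    using p0 by simp
  finally have eq: "(a + b) ^ p - a ^ p - b ^ p = (\<Sum>k\<in>{..p} - {0, p}. ?f k)"
    by simp
  have "(of_nat p :: 'a) dvd (\<Sum>k\<in>{..p} - {0, p}. ?f k)"
  proof (rule dvd_sum)
    fix k assume "k \<in> {..p} - {0, p}"
    then have "p dvd (p choose k)"
      using p p0 by (intro dvd_choose_prime) auto
    then obtain m where "p choose k = p * m"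
      by blast
    then show "(of_nat p :: 'a) dvd ?f k"
      by (simp add: mult.assoc)
  qed
  then show ?thesis
    by (simp only: eq)
qed

text \<open>If \<open>u \<equiv> v\<close> modulo \<open>p\<^sup>k\<close> with \<open>k \<ge> 1\<close>, then \<open>u\<^sup>p \<equiv> v\<^sup>p\<close> modulo \<open>p\<^sup>k\<^sup>+\<^sup>1\<close>:
  the cofactor \<open>\<Sum>\<^sub>i v\<^sup>p\<^sup>-\<^sup>1\<^sup>-\<^sup>i u\<^sup>i\<close> of \<open>u - v\<close> is congruent to \<open>p v\<^sup>p\<^sup>-\<^sup>1\<close> modulo \<open>p\<close>.\<close>

lemma of_nat_power_dvd_power_diff:
  fixes u v :: "'a::comm_ring_1"
  assumes k: "k \<ge> 1" and uv: "(of_nat p :: 'a) ^ k dvd (u - v)"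
  shows "(of_nat p :: 'a) ^ Suc k dvd (u ^ p - v ^ p)"
proof -
  let ?S = "\<Sum>i<p. v ^ (p - Suc i) * u ^ i"
  have p_uv: "(of_nat p :: 'a) dvd (u - v)"
    using k by (intro dvd_trans[OF _ uv]) (simp add: dvd_power)
  have "v ^ (p - Suc i) * u ^ i = v ^ (p - 1) + v ^ (p - Suc i) * (u ^ i - v ^ i)" if "i < p" for i
  proof -
    have "v ^ (p - Suc i) * v ^ i = v ^ (p - 1)"
      using that by (simp flip: power_add)
    then show ?thesis
      by (simp add: algebra_simps)
  qed
  then have "?S = of_nat p * v ^ (p - 1) + (\<Sum>i<p. v ^ (p - Suc i) * (u ^ i - v ^ i))"
    by (simp add: sum.distrib)
  moreover have "(of_nat p :: 'a) dvd v ^ (p - Suc i) * (u ^ i - v ^ i)" for i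
  proof -
    have "(u - v) dvd (u ^ i - v ^ i)"
      by (simp add: power_diff_sumr2)
    then show ?thesis
      by (intro dvd_mult dvd_trans[OF p_uv])
  qed
  ultimately have "(of_nat p :: 'a) dvd ?S"
    by (simp add: dvd_add dvd_sum)
  then have "(of_nat p :: 'a) ^ k * of_nat p dvd (u - v) * ?S"
    by (rule mult_dvd_mono[OF uv])
  then show ?thesis
    by (simp add: power_diff_sumr2 mult.commute)
qed

lemma of_nat_power_dvd_power_power_diff:
  fixes u v :: "'a::comm_ring_1"
  assumes "(of_nat p :: 'a) dvd (u - v)"
  shows "(of_nat p :: 'a) ^ Suc n dvd (u ^ (p ^ n) - v ^ (p ^ n))"
proof (induction n)
  case (Suc n)
  have "(of_nat p :: 'a) ^ Suc (Suc n) dvd ((u ^ (p ^ n)) ^ p - (v ^ (p ^ n)) ^ p)"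
    by (rule of_nat_power_dvd_power_diff[OF _ Suc.IH]) simp
  then show ?case
    by (simp add: power_mult[symmetric] mult.commute)
qed (use assms in simp)

definition frob :: "nat \<Rightarrow> 'r zpoly \<Rightarrow> 'r zpoly" where
  "frob p = peval (\<lambda>v. pvar v ^ p)"

lemma cring_hom_frob: "cring_hom (frob p)"
  by (simp add: frob_def cring_hom_peval)

lemma frob_of_nat_mult: "frob p (of_nat n * y) = of_nat n * frob p y"
  by (simp add: cring_hom_mult[OF cring_hom_frob] cring_hom_of_nat[OF cring_hom_frob])

lemma of_nat_prime_dvd_frob_minus_power:
  assumes p: "Factorial_Ring.prime p"
  shows "(of_nat p :: 'r zpoly) dvd (frob p a - a ^ p)"
proof (induction a rule: zpoly_induct)
  case one
  then show ?case
    by (simp add: cring_hom_one[OF cring_hom_frob])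
next
  case (var v)
  then show ?case
    by (simp add: frob_def)
next
  case (diff P P')
  have "frob p (P - P') - (P - P') ^ p
      = (frob p P - P ^ p) - (frob p P' - P' ^ p) + (((P - P') + P') ^ p - (P - P') ^ p - P' ^ p)"
    by (simp add: cring_hom_diff[OF cring_hom_frob] algebra_simps)
  then show ?case
    using diff of_nat_prime_dvd_power_add[OF p, of "P - P'" P'] by (metis dvd_add dvd_diff)
next
  case (mult P P')
  have "frob p (P * P') - (P * P') ^ p = (frob p P - P ^ p) * frob p P' + P ^ p * (frob p P' - P' ^ p)"
    by (simp add: cring_hom_mult[OF cring_hom_frob] power_mult_distrib algebra_simps)
  then show ?case
    using mult by (metis dvd_add dvd_mult dvd_mult2)
qed

definition dwork_seqs :: "nat \<Rightarrow> (nat \<Rightarrow> 'r zpoly) set" where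
  "dwork_seqs p = {x. \<forall>n. (of_nat p :: 'r zpoly) ^ Suc n dvd (x (Suc n) - frob p (x n))}"

lemma dwork_seqs_iff:
  "x \<in> dwork_seqs p \<longleftrightarrow> (\<forall>n. (of_nat p :: 'r zpoly) ^ Suc n dvd (x (Suc n) - frob p (x n)))"
  by (simp add: dwork_seqs_def)

lemma add_subgroup_dwork_seqs: "add_subgroup (dwork_seqs p)"
  unfolding add_subgroup_def
proof (intro conjI ballI)
  show "(\<lambda>_. 0) \<in> dwork_seqs p"
    by (simp add: dwork_seqs_iff cring_hom_zero[OF cring_hom_frob])
  show "(\<lambda>i. x i + y i) \<in> dwork_seqs p" if "x \<in> dwork_seqs p" "y \<in> dwork_seqs p" for x y
  proof -
    have eq: "x (Suc n) + y (Suc n) - frob p (x n + y n)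
        = (x (Suc n) - frob p (x n)) + (y (Suc n) - frob p (y n))" for n
      by (simp add: cring_hom_add[OF cring_hom_frob])
    show ?thesis
      using that unfolding dwork_seqs_iff by (simp only: eq) (blast intro: dvd_add)
  qed
  show "(\<lambda>i. - x i) \<in> dwork_seqs p" if "x \<in> dwork_seqs p" for x
  proof -
    have eq: "- x (Suc n) - frob p (- x n) = - (x (Suc n) - frob p (x n))" for n
      by (simp add: cring_hom_uminus[OF cring_hom_frob])
    show ?thesis
      using that unfolding dwork_seqs_iff eq dvd_minus_iff .
  qed
qed

lemma dwork_seqs_prefix_closed: "prefix_closure (dwork_seqs p :: (nat \<Rightarrow> 'r zpoly) set) \<subseteq> dwork_seqs p"
proof
  fix x :: "nat \<Rightarrow> 'r zpoly"
  assume x: "x \<in> prefix_closure (dwork_seqs p)"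
  have "(of_nat p :: 'r zpoly) ^ Suc n dvd (x (Suc n) - frob p (x n))" for n
  proof -
    obtain h where h: "h \<in> dwork_seqs p" "\<forall>i<Suc (Suc n). h i = x i"
      using x[unfolded prefix_closure_iff] by blast
    then have "h (Suc n) = x (Suc n)" "h n = x n"
      by auto
    with h(1) show ?thesis
      by (metis dwork_seqs_iff)
  qed
  then show "x \<in> dwork_seqs p"
    by (simp add: dwork_seqs_iff)
qed

lemma teich_dwork_seqs:
  fixes a :: "'r zpoly"
  assumes "Factorial_Ring.prime p"
  shows "teich p a \<in> dwork_seqs p"
proof -
  have "(of_nat p :: 'r zpoly) dvd (a ^ p - frob p a)"
    using of_nat_prime_dvd_frob_minus_power[OF assms, of a] by (metis dvd_minus_iff minus_diff_eq)
  from of_nat_power_dvd_power_power_diff[OF this]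
  show ?thesis
    by (simp add: dwork_seqs_iff teich_def cring_hom_power[OF cring_hom_frob] power_mult[symmetric])
qed

lemma seqV_dwork_seqs:
  fixes x :: "nat \<Rightarrow> 'r zpoly"
  assumes x: "x \<in> dwork_seqs p"
  shows "seqV p x \<in> dwork_seqs p"
  unfolding dwork_seqs_iff
proof
  fix n
  show "(of_nat p :: 'r zpoly) ^ Suc n dvd (seqV p x (Suc n) - frob p (seqV p x n))"
  proof (cases n)
    case 0
    then show ?thesis
      by (simp add: seqV_def cring_hom_zero[OF cring_hom_frob])
  next
    case (Suc m)
    have "seqV p x (Suc n) - frob p (seqV p x n) = of_nat p * (x (Suc m) - frob p (x m))"
      by (simp add: Suc seqV_def frob_of_nat_mult algebra_simps)
    moreover have "(of_nat p :: 'r zpoly) * of_nat p ^ Suc m dvd of_nat p * (x (Suc m) - frob p (x m))"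
      using x by (intro mult_dvd_mono) (auto simp: dwork_seqs_iff)
    ultimately show ?thesis
      by (simp add: Suc)
  qed
qed

lemma Xgrp_subset_dwork_seqs:
  assumes "Factorial_Ring.prime p"
  shows "Xgrp p \<subseteq> dwork_seqs p"
proof (rule Xgrp_least[OF add_subgroup_dwork_seqs dwork_seqs_prefix_closed])
  show "(seqV p ^^ n) (teich p b) \<in> dwork_seqs p" for n b
    by (induction n) (simp_all add: teich_dwork_seqs[OF assms] seqV_dwork_seqs)
qed

lemma XIgrp_subset_range_Iker: "XIgrp p \<subseteq> {x. range x \<subseteq> (Iker :: 'r::comm_ring_1 zpoly set)}"
proof (rule XIgrp_least)
  show "add_subgroup {x. range x \<subseteq> (Iker :: 'r zpoly set)}"
    by (auto simp: add_subgroup_def Iker_iff peval_add peval_uminus image_subset_iff)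
  show "prefix_closure {x. range x \<subseteq> (Iker :: 'r zpoly set)} \<subseteq> {x. range x \<subseteq> Iker}"
  proof
    fix x :: "nat \<Rightarrow> 'r zpoly"
    assume x: "x \<in> prefix_closure {x. range x \<subseteq> Iker}"
    have "x i \<in> Iker" for i
      using x[unfolded prefix_closure_iff, rule_format, of "Suc i"] by (metis lessI mem_Collect_eq rangeI subsetD)
    then show "x \<in> {x. range x \<subseteq> Iker}"
      by auto
  qed
  show "(\<lambda>i. (seqV p ^^ n) (teich p a) i - (seqV p ^^ n) (teich p b) i) \<in> {x. range x \<subseteq> Iker}"
    if "a - b \<in> Iker" for n and a b :: "'r zpoly"
    using that by (auto simp: Iker_iff peval_diff seqV_funpow teich_def peval_power image_subset_iff
        cring_hom_mult[OF cring_hom_peval] cring_hom_of_nat[OF cring_hom_peval])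
qed

lemma zpoly_of_nat_mult_cancel:
  assumes "p > 0" "(of_nat p :: 'r zpoly) * u = of_nat p * w"
  shows "u = w"
proof (rule poly_mapping_eqI)
  have lookup: "Poly_Mapping.lookup (of_nat p * v) k = int p * Poly_Mapping.lookup v k" for v :: "'r zpoly" and k
  proof -
    have "(of_nat p :: 'r zpoly) * v = Poly_Mapping.map ((*) (of_nat p)) v"
      by (simp add: mult_map_scale_conv_mult)
    then show ?thesis
      by (simp add: Poly_Mapping.map.rep_eq when_def)
  qed
  fix k
  show "Poly_Mapping.lookup u k = Poly_Mapping.lookup w k"
    using arg_cong[OF assms(2), of "\<lambda>v. Poly_Mapping.lookup v k"] assms(1) by (simp add: lookup)
qed

lemma zpoly_of_nat_power_dvd_cancel:
  assumes "p > 0" "(of_nat p :: 'r zpoly) ^ Suc k dvd of_nat p * u"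
  shows "(of_nat p :: 'r zpoly) ^ k dvd u"
proof -
  obtain w where "of_nat p * u = (of_nat p :: 'r zpoly) * (of_nat p ^ k * w)"
    using assms(2) by (auto simp: mult.assoc elim!: dvdE)
  then have "u = of_nat p ^ k * w"
    by (rule zpoly_of_nat_mult_cancel[OF assms(1)])
  then show ?thesis
    by simp
qed

lemma Iker_of_nat_mult_cancel:
  assumes "\<forall>r :: 'r::comm_ring_1. of_nat p * r = 0 \<longrightarrow> r = 0" "(of_nat p :: 'r zpoly) * u \<in> Iker"
  shows "u \<in> Iker"
  using assms by (simp add: Iker_iff cring_hom_mult[OF cring_hom_peval] cring_hom_of_nat[OF cring_hom_peval])

text \<open>Since \<open>\<int>[R]\<close> has no \<open>p\<close>-torsion, a Dwork sequence starting with \<open>0\<close> is divisible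
  by \<open>p\<close> entrywise, and dividing its tail by \<open>p\<close> gives again a Dwork sequence.\<close>

lemma dwork_seqs_eq_seqV:
  fixes z :: "nat \<Rightarrow> 'r zpoly"
  assumes p: "p > 0" and z: "z \<in> dwork_seqs p" and z0: "z 0 = 0"
  obtains y where "y \<in> dwork_seqs p" "z = seqV p y"
proof -
  have "(of_nat p :: 'r zpoly) dvd z n" for n
  proof (induction n)
    case (Suc n)
    have "(of_nat p :: 'r zpoly) dvd of_nat p ^ Suc n"
      by simp
    also have "\<dots> dvd z (Suc n) - frob p (z n)"
      using z by (simp add: dwork_seqs_iff)
    finally have "(of_nat p :: 'r zpoly) dvd z (Suc n) - frob p (z n)" .
    moreover have "(of_nat p :: 'r zpoly) dvd frob p (z n)"
      using Suc.IH by (auto simp: frob_of_nat_mult elim!: dvdE)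
    ultimately show ?case
      by (metis diff_add_cancel dvd_add)
  qed (simp add: z0)
  then have "\<forall>n. \<exists>w. z (Suc n) = of_nat p * w"
    by (auto simp: dvd_def)
  then obtain y where y: "\<And>n. z (Suc n) = of_nat p * y n"
    by metis
  have "(of_nat p :: 'r zpoly) ^ Suc n dvd (y (Suc n) - frob p (y n))" for n
  proof (rule zpoly_of_nat_power_dvd_cancel[OF p])
    have "z (Suc (Suc n)) - frob p (z (Suc n)) = of_nat p * (y (Suc n) - frob p (y n))"
      by (simp add: y frob_of_nat_mult algebra_simps)
    then show "(of_nat p :: 'r zpoly) ^ Suc (Suc n) dvd of_nat p * (y (Suc n) - frob p (y n))"
      using z by (metis dwork_seqs_iff)
  qed
  then have "y \<in> dwork_seqs p"
    by (simp add: dwork_seqs_iff)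
  moreover have "z = seqV p y"
  proof
    fix i
    show "z i = seqV p y i"
      by (cases i) (simp_all add: seqV_def z0 y)
  qed
  ultimately show ?thesis
    by (rule that)
qed

lemma dwork_Iker_seq_decompose:
  fixes x :: "nat \<Rightarrow> ('r::comm_ring_1) zpoly"
  assumes p: "Factorial_Ring.prime p" and tf: "\<forall>r :: 'r. of_nat p * r = 0 \<longrightarrow> r = 0"
    and x: "x \<in> dwork_seqs p" "range x \<subseteq> Iker"
  obtains a y where "a \<in> Iker" "y \<in> dwork_seqs p" "range y \<subseteq> Iker"
    "x = (\<lambda>i. teich p a i + seqV p y i)"
proof -
  have p0: "p > 0"
    using p prime_gt_0_nat by blast
  have x0: "x 0 \<in> Iker"
    using x(2) by auto
  define z where "z = (\<lambda>i. x i - teich p (x 0) i)"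
  have "z \<in> dwork_seqs p"
    unfolding z_def using x(1) teich_dwork_seqs[OF p] by (rule add_subgroup_diff[OF add_subgroup_dwork_seqs])
  moreover have "z 0 = 0"
    by (simp add: z_def teich_def)
  ultimately obtain y where y: "y \<in> dwork_seqs p" "z = seqV p y"
    using dwork_seqs_eq_seqV[OF p0] by blast
  have "range (teich p (x 0)) \<subseteq> Iker"
    using XIgrp_subset_range_Iker teich_XIgrp[OF p0 x0] by blast
  then have "range z \<subseteq> Iker"
    using x(2) by (auto simp: z_def Iker_iff peval_diff image_subset_iff)
  then have "of_nat p * y n \<in> Iker" for n
    using rangeI[of z "Suc n"] by (auto simp: y(2) seqV_def)
  then have "range y \<subseteq> Iker"
    using Iker_of_nat_mult_cancel[OF tf] by blast
  moreover have "x = (\<lambda>i. teich p (x 0) i + seqV p y i)"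
    unfolding y(2)[symmetric] by (simp add: z_def)
  ultimately show ?thesis
    by (rule that[OF x0 y(1)])
qed

lemma dwork_Iker_seq_XIgrp:
  fixes x :: "nat \<Rightarrow> ('r::comm_ring_1) zpoly"
  assumes p: "Factorial_Ring.prime p" and tf: "\<forall>r :: 'r. of_nat p * r = 0 \<longrightarrow> r = 0"
    and x: "x \<in> dwork_seqs p" "range x \<subseteq> Iker"
  shows "x \<in> XIgrp p"
proof -
  have p0: "p > 0"
    using p prime_gt_0_nat by blast
  have "\<exists>h\<in>XIgrp p. \<forall>i<n. h i = x i"
    if "x \<in> dwork_seqs p" "range x \<subseteq> Iker" for n and x :: "nat \<Rightarrow> 'r zpoly"
    using that
  proof (induction n arbitrary: x)
    case 0
    then show ?case
      using XIgrp_zero by blast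
  next
    case (Suc n)
    obtain a y where a: "a \<in> Iker" and y: "y \<in> dwork_seqs p" "range y \<subseteq> Iker"
      and x_eq: "x = (\<lambda>i. teich p a i + seqV p y i)"
      using dwork_Iker_seq_decompose[OF p tf Suc.prems] .
    obtain h where h: "h \<in> XIgrp p" "\<forall>i<n. h i = y i"
      using Suc.IH[OF y] by blast
    have mem: "(\<lambda>i. teich p a i + seqV p h i) \<in> XIgrp p"
      by (intro XIgrp_add teich_XIgrp[OF p0 a] seqV_XIgrp h)
    have agree: "\<forall>i<Suc n. teich p a i + seqV p h i = x i"
      using h(2) by (auto simp: x_eq seqV_def)
    show ?case
      by (rule bexI[OF _ mem]) (use agree in simp)
  qed
  with x have "x \<in> prefix_closure (XIgrp p)"
    by (simp add: prefix_closure_iff)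
  then show ?thesis
    using XIgrp_prefix_closed by blast
qed

lemma E_p_torsion_free:
  assumes p: "Factorial_Ring.prime p" and tf: "\<forall>a :: 'r::comm_ring_1. of_nat p * a = 0 \<longrightarrow> a = 0"
    and e: "e \<in> carrier (E p :: 'r Eelt monoid)" "e [^]\<^bsub>E p\<^esub> p = \<one>\<^bsub>E p\<^esub>"
  shows "e = \<one>\<^bsub>E p\<^esub>"
proof -
  obtain c where c: "c \<in> Xgrp p" "e = Ecos p c"
    using e(1) by (auto simp: carrier_E)
  then have "(\<lambda>i. of_nat p * c i) \<in> XIgrp p"
    using e(2) by (simp add: pow_E_Ecos one_E Ecos_eq_iff)
  then have "of_nat p * c i \<in> Iker" for i
    using XIgrp_subset_range_Iker by blast
  then have "range c \<subseteq> Iker"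
    using Iker_of_nat_mult_cancel[OF tf] by blast
  moreover have "c \<in> dwork_seqs p"
    using Xgrp_subset_dwork_seqs[OF p] c(1) by blast
  ultimately have "c \<in> XIgrp p"
    using dwork_Iker_seq_XIgrp[OF p tf] by blast
  then show ?thesis
    using c by (simp add: one_E Ecos_eq_iff)
qed


section \<open>Topological generation\<close>

lemma Union_carrier_E: "\<Union>(carrier (E p :: ('r::comm_ring_1) Eelt monoid)) = Xgrp p"
proof
  show "\<Union>(carrier (E p :: 'r Eelt monoid)) \<subseteq> Xgrp p"
    using XIgrp_subset_Xgrp by (auto simp: carrier_E Ecos_def intro: Xgrp_add)
  show "Xgrp p \<subseteq> \<Union>(carrier (E p :: 'r Eelt monoid))"
  proof
    fix c :: "nat \<Rightarrow> 'r zpoly"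
    assume "c \<in> Xgrp p"
    then show "c \<in> \<Union>(carrier (E p))"
      using Ecos_self[of c p] by (auto simp: carrier_E)
  qed
qed

lemma Union_Int_carrier_E:
  assumes "U \<subseteq> carrier (E p)" "U' \<subseteq> carrier (E p)"
  shows "\<Union>(U \<inter> U') = \<Union>U \<inter> \<Union>U'"
proof
  show "\<Union>U \<inter> \<Union>U' \<subseteq> \<Union>(U \<inter> U')"
  proof
    fix z assume "z \<in> \<Union>U \<inter> \<Union>U'"
    then obtain C C' where C: "C \<in> U" "C' \<in> U'" "z \<in> C" "z \<in> C'"
      by blast
    moreover have "C \<in> Ecos p ` Xgrp p" "C' \<in> Ecos p ` Xgrp p"
      using assms C by (auto simp: carrier_E)
    then obtain c c' where "C = Ecos p c" "C' = Ecos p c'"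
      by blast
    ultimately have "C = C'"
      using Ecos_eq_of_mem by metis
    with C show "z \<in> \<Union>(U \<inter> U')"
      by blast
  qed
qed blast

lemma openin_Etop:
  "openin (Etop p) (U :: ('r::comm_ring_1) Eelt set) \<longleftrightarrow> U \<subseteq> carrier (E p) \<and> openin (subtopology seq_top (Xgrp p)) (\<Union>U)"
proof -
  have "istopology (\<lambda>U :: 'r Eelt set. U \<subseteq> carrier (E p) \<and> openin (subtopology seq_top (Xgrp p)) (\<Union>U))"
    unfolding istopology_def
  proof (intro conjI allI impI)
    fix U U' :: "'r Eelt set"
    assume U: "U \<subseteq> carrier (E p) \<and> openin (subtopology seq_top (Xgrp p)) (\<Union>U)"
      and U': "U' \<subseteq> carrier (E p) \<and> openin (subtopology seq_top (Xgrp p)) (\<Union>U')"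
    show "U \<inter> U' \<subseteq> carrier (E p)"
      using U by blast
    show "openin (subtopology seq_top (Xgrp p)) (\<Union>(U \<inter> U'))"
      using U U' Union_Int_carrier_E[of U p U'] by (simp add: openin_Int)
  next
    fix K :: "'r Eelt set set"
    assume K: "\<forall>U\<in>K. U \<subseteq> carrier (E p) \<and> openin (subtopology seq_top (Xgrp p)) (\<Union>U)"
    show "\<Union>K \<subseteq> carrier (E p)"
      using K by blast
    have "\<Union>(\<Union>K) = \<Union>(Union ` K)"
      by blast
    moreover have "openin (subtopology seq_top (Xgrp p)) (\<Union>(Union ` K))"
      using K by (intro openin_Union) blast
    ultimately show "openin (subtopology seq_top (Xgrp p)) (\<Union>(\<Union>K))"
      by simp
  qed
  then show ?thesis
    unfolding Etop_def by (simp add: topology_inverse')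
qed

lemma topspace_Etop: "topspace (Etop p) = carrier (E p :: ('r::comm_ring_1) Eelt monoid)"
proof -
  have "openin (Etop p) (carrier (E p))"
    using openin_topspace[of "subtopology seq_top (Xgrp p)"] by (simp add: openin_Etop Union_carrier_E)
  moreover have "\<And>S. openin (Etop p) S \<Longrightarrow> S \<subseteq> carrier (E p)"
    by (simp add: openin_Etop)
  ultimately show ?thesis
    unfolding topspace_def by blast
qed

definition Egens :: "nat \<Rightarrow> ('r::comm_ring_1) Eelt set" where
  "Egens p = {(EV p ^^ n) (Eteich p x) | n x. True}"

lemma Egens_carrier: "Egens p \<subseteq> carrier (E p)"
  using Xgrp_generator by (auto simp: Egens_def Eteich_def funpow_EV_Ecos carrier_E)

lemma Xgrp_subset_prefix_closure_generate:
  "Xgrp p \<subseteq> prefix_closure {g \<in> Xgrp p. Ecos p g \<in> generate (E p) (Egens p)}"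
proof -
  let ?G = "{g \<in> Xgrp p. Ecos p g \<in> generate (E p) (Egens p)}"
  interpret subgroup "generate (E p) (Egens p)" "E p"
    by (rule group.generate_is_subgroup[OF group_E Egens_carrier])
  have G: "add_subgroup ?G"
    unfolding add_subgroup_def
  proof (intro conjI ballI)
    show "(\<lambda>_. 0) \<in> ?G"
      using one_closed by (simp add: one_E Xgrp_zero)
    show "(\<lambda>i. x i + y i) \<in> ?G" if "x \<in> ?G" "y \<in> ?G" for x y
      using that m_closed[of "Ecos p x" "Ecos p y"] by (simp add: Xgrp_add mult_E_Ecos)
    show "(\<lambda>i. - x i) \<in> ?G" if "x \<in> ?G" for x
      using that m_inv_closed[of "Ecos p x"] by (simp add: Xgrp_uminus inv_E_Ecos)
  qed
  have generators: "(seqV p ^^ n) (teich p b) \<in> ?G" for n b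
  proof -
    have "b - pvar (peval id b) \<in> Iker"
      by (simp add: Iker_iff peval_diff)
    from XIgrp_generator[OF this, where n = n and p = p]
    have "Ecos p ((seqV p ^^ n) (teich p b)) = (EV p ^^ n) (Eteich p (peval id b))"
      by (simp add: Eteich_def funpow_EV_Ecos Ecos_eq_iff)
    then have "Ecos p ((seqV p ^^ n) (teich p b)) \<in> generate (E p) (Egens p)"
      by (auto simp: Egens_def intro: generate.incl)
    then show "(seqV p ^^ n) (teich p b) \<in> ?G"
      using Xgrp_generator by blast
  qed
  show ?thesis
    by (rule Xgrp_least[OF add_subgroup_prefix_closure[OF G] prefix_closure_prefix_closure])
       (use generators subset_prefix_closure[of ?G] in blast)
qed

lemma closure_generate_Egens:
  "Etop p closure_of generate (E p) (Egens p) = carrier (E p :: ('r::comm_ring_1) Eelt monoid)"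
proof
  show "Etop p closure_of generate (E p) (Egens p) \<subseteq> carrier (E p :: 'r Eelt monoid)"
    using closure_of_subset_topspace[of "Etop p"] by (simp add: topspace_Etop)
next
  show "carrier (E p :: 'r Eelt monoid) \<subseteq> Etop p closure_of generate (E p) (Egens p)"
  proof
    fix C :: "'r Eelt"
    assume C: "C \<in> carrier (E p)"
    then obtain c where c: "c \<in> Xgrp p" "C = Ecos p c"
      by (auto simp: carrier_E)
    show "C \<in> Etop p closure_of generate (E p) (Egens p)"
      unfolding in_closure_of topspace_Etop
    proof (intro conjI allI impI C)
      fix T assume T: "C \<in> T \<and> openin (Etop p) T"
      then obtain W where W: "openin seq_top W" "\<Union>T = W \<inter> Xgrp p" and T_carrier: "T \<subseteq> carrier (E p)"
        by (auto simp: openin_Etop openin_subtopology)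
      have "c \<in> W"
        using T c W Ecos_self[of c p] by blast
      then obtain n where n: "\<forall>y. (\<forall>i<n. y i = c i) \<longrightarrow> y \<in> W"
        using W(1) unfolding openin_seq_top_iff by blast
      have "c \<in> prefix_closure {g \<in> Xgrp p. Ecos p g \<in> generate (E p) (Egens p)}"
        using Xgrp_subset_prefix_closure_generate c(1) by blast
      then obtain g where g: "g \<in> Xgrp p" "Ecos p g \<in> generate (E p) (Egens p)" "\<forall>i<n. g i = c i"
        unfolding prefix_closure_iff by blast
      then obtain T' where T': "T' \<in> T" "g \<in> T'"
        using n W by blast
      moreover obtain t where "T' = Ecos p t"
        using T' T_carrier by (auto simp: carrier_E)
      ultimately have "Ecos p g \<in> T"
        using Ecos_eq_of_mem by metis
      with g show "\<exists>y. y \<in> generate (E p) (Egens p) \<and> y \<in> T"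
        by blast
    qed
  qed
qed


theorem lemma2p7:
  fixes p :: nat
  assumes "Factorial_Ring.prime p"
  shows
    \<comment> \<open>E(R) is topologically generated by the V^n<x>\<close>
    "Etop p closure_of generate (E p) {(EV p ^^ n) (Eteich p x) | n (x :: 'r::comm_ring_1). True}
       = carrier (E p :: 'r Eelt monoid)
   \<and> comm_group (E p :: 'r Eelt monoid)
   \<and> EV p \<in> hom (E p :: 'r Eelt monoid) (E p)
   \<and> (\<forall>x :: 'r. Eteich p x \<in> carrier (E p))
   \<comment> \<open>functoriality of E, V and < >\<close>
   \<and> (\<forall>f :: 'r \<Rightarrow> 's::comm_ring_1. cring_hom f \<longrightarrow>
        Emap p f \<in> hom (E p :: 'r Eelt monoid) (E p :: 's Eelt monoid)
        \<and> (\<forall>C \<in> carrier (E p :: 'r Eelt monoid). Emap p f (EV p C) = EV p (Emap p f C))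
        \<and> (\<forall>x. Emap p f (Eteich p x) = Eteich p (f x)))
   \<and> (\<forall>C \<in> carrier (E p :: 'r Eelt monoid). Emap p (id :: 'r \<Rightarrow> 'r) C = C)
   \<and> (\<forall>(f :: 'r \<Rightarrow> 's::comm_ring_1) (g :: 's \<Rightarrow> 't::comm_ring_1).
        cring_hom f \<and> cring_hom g \<longrightarrow>
        (\<forall>C \<in> carrier (E p :: 'r Eelt monoid). Emap p (g \<circ> f) C = Emap p g (Emap p f C)))
   \<comment> \<open>(1)\<close>
   \<and> Eteich p (0 :: 'r) = \<one>\<^bsub>E p\<^esub>
   \<and> (p \<noteq> 2 \<longrightarrow> (\<forall>x :: 'r. Eteich p (- x) = inv\<^bsub>E p\<^esub> (Eteich p x)))
   \<comment> \<open>(2)\<close>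
   \<and> (\<forall>x y :: 'r.
        EV p (Eteich p ((x + y) ^ p)) \<otimes>\<^bsub>E p\<^esub> inv\<^bsub>E p\<^esub> (Eteich p (x + y) [^]\<^bsub>E p\<^esub> p)
        = (EV p (Eteich p (x ^ p)) \<otimes>\<^bsub>E p\<^esub> inv\<^bsub>E p\<^esub> (Eteich p x [^]\<^bsub>E p\<^esub> p))
          \<otimes>\<^bsub>E p\<^esub> (EV p (Eteich p (y ^ p)) \<otimes>\<^bsub>E p\<^esub> inv\<^bsub>E p\<^esub> (Eteich p y [^]\<^bsub>E p\<^esub> p)))
   \<comment> \<open>(3)\<close>
   \<and> filt_complete (E p :: 'r Eelt monoid) (EV p)
   \<comment> \<open>(4)\<close>
   \<and> ((\<forall>a :: 'r. of_nat p * a = 0 \<longrightarrow> a = 0) \<longrightarrow>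
        (\<forall>e \<in> carrier (E p :: 'r Eelt monoid). e [^]\<^bsub>E p\<^esub> p = \<one>\<^bsub>E p\<^esub> \<longrightarrow> e = \<one>\<^bsub>E p\<^esub>))"
proof -
  have p0: "p > 0"
    using assms prime_gt_0_nat by blast
  have odd: "odd p" if "p \<noteq> 2"
    using that prime_ge_2_nat[OF assms] prime_odd_nat[OF assms] by simp
  have torsion_free: "\<forall>e\<in>carrier (E p :: 'r Eelt monoid). e [^]\<^bsub>E p\<^esub> p = \<one>\<^bsub>E p\<^esub> \<longrightarrow> e = \<one>\<^bsub>E p\<^esub>"
    if "\<forall>a :: 'r. of_nat p * a = 0 \<longrightarrow> a = 0"
    using E_p_torsion_free[OF assms that] by blast
  show ?thesis
    using closure_generate_Egens[of p] torsion_free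
    by (auto simp: Egens_def comm_group_E EV_hom Eteich_carrier Emap_hom Emap_EV Emap_Eteich Emap_id
        Emap_comp Eteich_zero[OF p0] Eteich_uminus[OF odd] EV_Eteich_additive[OF p0] filt_complete_E)
qed

end
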